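(* Let $A$ generate a $C_0$-semigroup on a Banach space $X$, let $U$ be a finite-dimensional Banach space, let $B\in\mathcal{L}(U,X_{-1})$, and let $Z$ be one of $E_\Phi$ (for a Young function $\Phi$), $L^1$ or $L^\infty$. For $f\in U$ let $Bf\in\mathcal{L}(\mathbb{C},X_{-1})$ denote $z\mapsto zBf$. Then (i) $\Sigma(A,B)$ is $Z$-ISS if and only if $\Sigma(A,Bf)$ is $Z$-ISS for every $f\in U$; (ii) $\Sigma(A,B)$ is integral ISS if and only if $\Sigma(A,Bf)$ is integral ISS for every $f\in U$.
   Context: $X_{-1}$ is the completion of $X$ w.r.t. $\|(\beta-A)^{-1}\cdot\|$, $\beta\in\rho(A)$; $T_{-1}$ extends the semigroup $T$ to $X_{-1}$. $\Sigma(A,B)$ denotes the system $\dot x=Ax+Bu$, $x(0)=x_0$, with mild solution $x(t)=T_{-1}(t)x_0+\int_0^tT_{-1}(t-s)Bu(s)ds$. $\mathcal{K}$: continuous strictly increasing $\mu:[0,\infty)\to[0,\infty)$ with $\mu(0)=0$; $\mathcal{K}_\infty$: those in $\mathcal{K}$ unbounded; $\mathcal{L}$: continuous strictly decreasing $\gamma:[0,\infty)\to[0,\infty)$ with limit $0$; $\mathcal{KL}$: $\beta:[0,\infty)^2\to[0,\infty)$ with $\beta(\cdot,t)\in\mathcal{K}$ for all $t\ge0$ and $\beta(s,\cdot)\in\mathcal{L}$ for all $s>0$. $\Sigma(A,B)$ is $Z$-ISS if there are $\beta\in\mathcal{KL}$, $\mu\in\mathcal{K}_\infty$ such that for all $t\ge0$,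 $x_0\in X$, $u\in Z(0,t;U)$: $x(t)\in X$ and $\|x(t)\|\le\beta(\|x_0\|,t)+\mu(\|u\|_{Z(0,t;U)})$. It is integral ISS if there are $\beta\in\mathcal{KL}$, $\theta\in\mathcal{K}_\infty$, $\mu\in\mathcal{K}$ such that for all $t\ge0$, $x_0\in X$, $u\in L^\infty(0,t;U)$: $x(t)\in X$ and $\|x(t)\|\le\beta(\|x_0\|,t)+\theta(\int_0^t\mu(\|u(s)\|)ds)$. A Young function is a continuous, convex, increasing $\Phi:[0,\infty)\to[0,\infty)$ with $\Phi(x)/x\to0$ ($x\to0$), $\Phi(x)/x\to\infty$ ($x\to\infty$); $E_\Phi(0,t;U)$ is the closure of boundedly supported $L^\infty$ functions in the Orlicz space $L_\Phi(0,t;U)$ normed by $\inf\{k>0:\int_0^t\Phi(\|u(s)\|/k)ds\le1\}$. *)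

theory Defs
  imports "HOL-Analysis.Analysis"
begin

text \<open>The library has no complex vector spaces.  A complex normed space is
modelled as a real normed space together with the operator I of
multiplication by the imaginary unit.\<close>

definition cplx_struct :: "('a::real_normed_vector \<Rightarrow> 'a) \<Rightarrow> bool" where
  "cplx_struct I \<longleftrightarrow> linear I \<and> (\<forall>x. I (I x) = - x) \<and>
     (\<forall>x a b. norm (a *\<^sub>R x + b *\<^sub>R I x) = cmod (Complex a b) * norm x)"

definition cscale :: "('a::real_vector \<Rightarrow> 'a) \<Rightarrow> complex \<Rightarrow> 'a \<Rightarrow> 'a" where
  "cscale I c x = Re c *\<^sub>R x + Im c *\<^sub>R I x"

definition bounded_clin ::
  "('a::real_normed_vector \<Rightarrow> 'a) \<Rightarrow> ('b::real_normed_vector \<Rightarrow> 'b) \<Rightarrow> ('a \<Rightarrow> 'b) \<Rightarrow> bool" where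
  "bounded_clin I1 I2 f \<longleftrightarrow> bounded_linear f \<and> (\<forall>x. f (I1 x) = I2 (f x))"

definition C0_semigroup :: "('x::banach \<Rightarrow> 'x) \<Rightarrow> (real \<Rightarrow> 'x \<Rightarrow> 'x) \<Rightarrow> bool" where
  "C0_semigroup I T \<longleftrightarrow>
     (\<forall>t\<ge>0. bounded_clin I I (T t)) \<and>
     T 0 = id \<and>
     (\<forall>s\<ge>0. \<forall>t\<ge>0. T (s + t) = T s \<circ> T t) \<and>
     (\<forall>x. ((\<lambda>t. T t x) \<longlongrightarrow> x) (at_right 0))"

definition gen_dom :: "(real \<Rightarrow> 'x::real_normed_vector \<Rightarrow> 'x) \<Rightarrow> 'x set" where
  "gen_dom T = {x. \<exists>y. ((\<lambda>h. (1 / h) *\<^sub>R (T h x - x)) \<longlongrightarrow> y) (at_right 0)}"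

definition gen :: "(real \<Rightarrow> 'x::real_normed_vector \<Rightarrow> 'x) \<Rightarrow> 'x \<Rightarrow> 'x" where
  "gen T x = Lim (at_right 0) (\<lambda>h. (1 / h) *\<^sub>R (T h x - x))"

definition resolv :: "('x::real_normed_vector \<Rightarrow> 'x) \<Rightarrow> (real \<Rightarrow> 'x \<Rightarrow> 'x) \<Rightarrow> complex \<Rightarrow> 'x \<Rightarrow> 'x" where
  "resolv I T \<beta> x = (THE y. y \<in> gen_dom T \<and> cscale I \<beta> y - gen T y = x)"

definition in_resolvent_set :: "('x::real_normed_vector \<Rightarrow> 'x) \<Rightarrow> (real \<Rightarrow> 'x \<Rightarrow> 'x) \<Rightarrow> complex \<Rightarrow> bool" where
  "in_resolvent_set I T \<beta> \<longleftrightarrow>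
     (\<forall>x. \<exists>!y. y \<in> gen_dom T \<and> cscale I \<beta> y - gen T y = x) \<and>
     bounded_linear (resolv I T \<beta>)"

text \<open>(Iy, J, Tm1) realises the extrapolation space X_{-1} (completion of X w.r.t.
  the norm of the resolvent, with J the canonical dense embedding) and the
  extrapolated semigroup T_{-1}.\<close>
definition extrapolation ::
  "('x::banach \<Rightarrow> 'x) \<Rightarrow> (real \<Rightarrow> 'x \<Rightarrow> 'x) \<Rightarrow> complex \<Rightarrow>
   ('y::banach \<Rightarrow> 'y) \<Rightarrow> ('x \<Rightarrow> 'y) \<Rightarrow> (real \<Rightarrow> 'y \<Rightarrow> 'y) \<Rightarrow> bool" where
  "extrapolation I T \<beta> Iy J Tm1 \<longleftrightarrow>
     cplx_struct Iy \<and> linear J \<and> (\<forall>x. J (I x) = Iy (J x)) \<and>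
     (\<forall>x. norm (J x) = norm (resolv I T \<beta> x)) \<and>
     closure (range J) = UNIV \<and>
     (\<forall>t\<ge>0. bounded_linear (Tm1 t) \<and> (\<forall>x. Tm1 t (J x) = J (T t x)))"

definition mild ::
  "(real \<Rightarrow> 'y::real_normed_vector \<Rightarrow> 'y) \<Rightarrow> ('x \<Rightarrow> 'y) \<Rightarrow> ('u \<Rightarrow> 'y) \<Rightarrow> 'x \<Rightarrow> (real \<Rightarrow> 'u) \<Rightarrow> real \<Rightarrow> 'y" where
  "mild Tm1 J B x0 u t = Tm1 t (J x0) + integral {0..t} (\<lambda>s. Tm1 (t - s) (B (u s)))"

definition classK :: "(real \<Rightarrow> real) \<Rightarrow> bool" where
  "classK \<mu> \<longleftrightarrow> continuous_on {0..} \<mu> \<and> strict_mono_on {0..} \<mu> \<and> \<mu> 0 = 0"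

definition classKinf :: "(real \<Rightarrow> real) \<Rightarrow> bool" where
  "classKinf \<mu> \<longleftrightarrow> classK \<mu> \<and> filterlim \<mu> at_top at_top"

definition classL :: "(real \<Rightarrow> real) \<Rightarrow> bool" where
  "classL \<gamma> \<longleftrightarrow> continuous_on {0..} \<gamma> \<and> (\<forall>x\<ge>0. \<gamma> x \<ge> 0) \<and>
     (\<forall>x y. 0 \<le> x \<longrightarrow> x < y \<longrightarrow> \<gamma> y < \<gamma> x) \<and> (\<gamma> \<longlongrightarrow> 0) at_top"

definition classKL :: "(real \<Rightarrow> real \<Rightarrow> real) \<Rightarrow> bool" where
  "classKL \<beta> \<longleftrightarrow> (\<forall>t\<ge>0. classK (\<lambda>s. \<beta> s t)) \<and> (\<forall>s>0. classL (\<lambda>t. \<beta> s t))"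

definition Young :: "(real \<Rightarrow> real) \<Rightarrow> bool" where
  "Young \<Phi> \<longleftrightarrow> continuous_on {0..} \<Phi> \<and> convex_on {0..} \<Phi> \<and> mono_on {0..} \<Phi> \<and>
     (\<forall>x\<ge>0. \<Phi> x \<ge> 0) \<and>
     ((\<lambda>x. \<Phi> x / x) \<longlongrightarrow> 0) (at_right 0) \<and> filterlim (\<lambda>x. \<Phi> x / x) at_top at_top"

definition meas_on :: "real \<Rightarrow> (real \<Rightarrow> 'u::real_normed_vector) \<Rightarrow> bool" where
  "meas_on t u \<longleftrightarrow> u \<in> borel_measurable (restrict_space lebesgue {0..t})"

definition Linf_mem :: "real \<Rightarrow> (real \<Rightarrow> 'u::real_normed_vector) \<Rightarrow> bool" where
  "Linf_mem t u \<longleftrightarrow> meas_on t u \<and> (\<exists>C. AE s in lebesgue. s \<in> {0..t} \<longrightarrow> norm (u s) \<le> C)"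

definition Linf_norm :: "real \<Rightarrow> (real \<Rightarrow> 'u::real_normed_vector) \<Rightarrow> real" where
  "Linf_norm t u = Inf {C. 0 \<le> C \<and> (AE s in lebesgue. s \<in> {0..t} \<longrightarrow> norm (u s) \<le> C)}"

definition L1_mem :: "real \<Rightarrow> (real \<Rightarrow> 'u::real_normed_vector) \<Rightarrow> bool" where
  "L1_mem t u \<longleftrightarrow> meas_on t u \<and>
     (\<integral>\<^sup>+ s. ennreal (norm (u s)) * indicator {0..t} s \<partial>lebesgue) < \<infinity>"

definition L1_norm :: "real \<Rightarrow> (real \<Rightarrow> 'u::real_normed_vector) \<Rightarrow> real" where
  "L1_norm t u = enn2real (\<integral>\<^sup>+ s. ennreal (norm (u s)) * indicator {0..t} s \<partial>lebesgue)"

definition orlicz_ok :: "(real \<Rightarrow> real) \<Rightarrow> real \<Rightarrow> (real \<Rightarrow> 'u::real_normed_vector) \<Rightarrow> real \<Rightarrow> bool" where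
  "orlicz_ok \<Phi> t u k \<longleftrightarrow> 0 < k \<and>
     (\<integral>\<^sup>+ s. ennreal (\<Phi> (norm (u s) / k)) * indicator {0..t} s \<partial>lebesgue) \<le> 1"

definition LPhi_mem :: "(real \<Rightarrow> real) \<Rightarrow> real \<Rightarrow> (real \<Rightarrow> 'u::real_normed_vector) \<Rightarrow> bool" where
  "LPhi_mem \<Phi> t u \<longleftrightarrow> meas_on t u \<and> (\<exists>k. orlicz_ok \<Phi> t u k)"

definition LPhi_norm :: "(real \<Rightarrow> real) \<Rightarrow> real \<Rightarrow> (real \<Rightarrow> 'u::real_normed_vector) \<Rightarrow> real" where
  "LPhi_norm \<Phi> t u = Inf {k. orlicz_ok \<Phi> t u k}"

definition EPhi_mem :: "(real \<Rightarrow> real) \<Rightarrow> real \<Rightarrow> (real \<Rightarrow> 'u::real_normed_vector) \<Rightarrow> bool" where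
  "EPhi_mem \<Phi> t u \<longleftrightarrow> LPhi_mem \<Phi> t u \<and>
     (\<forall>\<epsilon>>0. \<exists>v. Linf_mem t v \<and> LPhi_mem \<Phi> t (\<lambda>s. u s - v s) \<and>
                 LPhi_norm \<Phi> t (\<lambda>s. u s - v s) < \<epsilon>)"

datatype Zspace = EPhi "real \<Rightarrow> real" | L1 | Linfty

fun Z_mem :: "Zspace \<Rightarrow> real \<Rightarrow> (real \<Rightarrow> 'u::real_normed_vector) \<Rightarrow> bool" where
  "Z_mem (EPhi \<Phi>) t u = EPhi_mem \<Phi> t u"
| "Z_mem L1 t u = L1_mem t u"
| "Z_mem Linfty t u = Linf_mem t u"

fun Z_norm :: "Zspace \<Rightarrow> real \<Rightarrow> (real \<Rightarrow> 'u::real_normed_vector) \<Rightarrow> real" where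
  "Z_norm (EPhi \<Phi>) t u = LPhi_norm \<Phi> t u"
| "Z_norm L1 t u = L1_norm t u"
| "Z_norm Linfty t u = Linf_norm t u"

text \<open>"x(t) \<in> X" is expressed as "x(t) = J \<xi> for some \<xi> \<in> X", and then
  the X-norm of x(t) is the norm of \<xi> (J is injective).\<close>

definition Z_ISS ::
  "Zspace \<Rightarrow> (real \<Rightarrow> 'y::real_normed_vector \<Rightarrow> 'y) \<Rightarrow> ('x::real_normed_vector \<Rightarrow> 'y) \<Rightarrow>
   ('u::real_normed_vector \<Rightarrow> 'y) \<Rightarrow> bool" where
  "Z_ISS Z Tm1 J B \<longleftrightarrow> (\<exists>\<beta> \<mu>. classKL \<beta> \<and> classKinf \<mu> \<and>
     (\<forall>t\<ge>0. \<forall>x0. \<forall>u. Z_mem Z t u \<longrightarrow>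
        (\<exists>\<xi>. J \<xi> = mild Tm1 J B x0 u t \<and>
              norm \<xi> \<le> \<beta> (norm x0) t + \<mu> (Z_norm Z t u))))"

definition integral_ISS ::
  "(real \<Rightarrow> 'y::real_normed_vector \<Rightarrow> 'y) \<Rightarrow> ('x::real_normed_vector \<Rightarrow> 'y) \<Rightarrow>
   ('u::real_normed_vector \<Rightarrow> 'y) \<Rightarrow> bool" where
  "integral_ISS Tm1 J B \<longleftrightarrow> (\<exists>\<beta> \<theta> \<mu>. classKL \<beta> \<and> classKinf \<theta> \<and> classK \<mu> \<and>
     (\<forall>t\<ge>0. \<forall>x0. \<forall>u. Linf_mem t u \<longrightarrow>
        (\<exists>\<xi>. J \<xi> = mild Tm1 J B x0 u t \<and>
              norm \<xi> \<le> \<beta> (norm x0) t + \<theta> (integral {0..t} (\<lambda>s. \<mu> (norm (u s)))))))"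

definition Bcol :: "('y::real_vector \<Rightarrow> 'y) \<Rightarrow> ('u \<Rightarrow> 'y) \<Rightarrow> 'u \<Rightarrow> complex \<Rightarrow> 'y" where
  "Bcol Iy B f = (\<lambda>z. cscale Iy z (B f))"

end

(* Bf is B composed with the bounded real-linear map z |-> z f, and composing the control
   operator with a bounded linear map changes the input norms by at most a constant factor;
   hence ISS of Sigma(A,B) passes to every Sigma(A,Bf).

   Conversely, pick bounded coordinate functionals phi_b of the finite-dimensional space U,
   so that B u = sum_b phi_b(u) B b.  The mild solution of Sigma(A,B) is then the free
   evolution T(t) x0 plus the responses of the rank-one systems Sigma(A,B b), started at 0,
   to the scalar inputs phi_b o u, whose input norms are controlled by that of u; summing
   the ISS estimates of the columns gives one for B.  Applied to the zero input, ISS of any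
   Sigma(A,Bf) bounds the free evolution by a KL function.  In particular T is uniformly
   bounded, which makes the extrapolated semigroup strongly continuous, so that every term
   of the decomposition is (Henstock-Kurzweil) integrable and the integral may be split. *)

theory Submission
  imports Defs
begin

section \<open>Coordinates in finite-dimensional normed spaces\<close>

lemma closed_span_if_coefficients_bounded:
  fixes E :: "'a::banach set"
  assumes fin: "finite E" and K0: "K \<ge> 0"
    and K: "\<And>a. (\<Sum>b\<in>E. \<bar>a b\<bar>) \<le> K * norm (\<Sum>b\<in>E. a b *\<^sub>R b)"
  shows "closed (span E)"
proof (rule closed_sequential_limits[THEN iffD2], intro allI impI, elim conjE)
  fix x l assume xin: "\<forall>n. x n \<in> span E" and lim: "x \<longlonglongrightarrow> l"
  have "\<forall>n. \<exists>a. x n = (\<Sum>b\<in>E. a b *\<^sub>R b)"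
    using xin span_finite[OF fin] by auto
  then obtain a where a: "\<And>n. x n = (\<Sum>b\<in>E. a n b *\<^sub>R b)" by metis
  have "Cauchy (\<lambda>n. a n b)" if "b \<in> E" for b
  proof (rule metric_CauchyI)
    fix e :: real assume e: "e > 0"
    obtain M where M: "\<And>m n. m \<ge> M \<Longrightarrow> n \<ge> M \<Longrightarrow> dist (x m) (x n) < e / (K + 1)"
      using metric_CauchyD[OF LIMSEQ_imp_Cauchy[OF lim], of "e / (K + 1)"] e K0 by auto
    have "dist (a m b) (a n b) < e" if mn: "m \<ge> M" "n \<ge> M" for m n
    proof -
      have "dist (a m b) (a n b) \<le> (\<Sum>b\<in>E. \<bar>a m b - a n b\<bar>)"
        unfolding dist_real_def using fin \<open>b \<in> E\<close> by (intro member_le_sum) auto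
      also have "\<dots> \<le> K * norm (x m - x n)"
        using K[of "\<lambda>b. a m b - a n b"] by (simp add: a scaleR_diff_left sum_subtractf)
      also have "\<dots> \<le> K * (e / (K + 1))"
        using M[OF mn] K0 by (intro mult_left_mono) (auto simp: dist_norm)
      also have "\<dots> < e" using K0 e by (simp add: field_simps)
      finally show ?thesis .
    qed
    then show "\<exists>M. \<forall>m\<ge>M. \<forall>n\<ge>M. dist (a m b) (a n b) < e" by blast
  qed
  then have "\<forall>b\<in>E. \<exists>L. (\<lambda>n. a n b) \<longlonglongrightarrow> L"
    by (simp add: Cauchy_convergent_iff convergent_def)
  then obtain \<alpha> where \<alpha>: "\<And>b. b \<in> E \<Longrightarrow> (\<lambda>n. a n b) \<longlonglongrightarrow> \<alpha> b" by metis
  have "x \<longlonglongrightarrow> (\<Sum>b\<in>E. \<alpha> b *\<^sub>R b)"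
    unfolding a by (intro tendsto_sum tendsto_scaleR \<alpha> tendsto_const)
  then have "l = (\<Sum>b\<in>E. \<alpha> b *\<^sub>R b)" using lim LIMSEQ_unique by blast
  then show "l \<in> span E" using span_finite[OF fin] by auto
qed

lemma abs_scaleR_infdist_le_norm:
  assumes "w \<in> span E"
  shows "\<bar>c\<bar> * infdist e (span E) \<le> norm (c *\<^sub>R e + w)"
proof (cases "c = 0")
  case False
  have "- ((1 / c) *\<^sub>R w) \<in> span E" using assms by (intro span_neg span_scale)
  then have "infdist e (span E) \<le> dist e (- ((1 / c) *\<^sub>R w))" by (rule infdist_le)
  then have "infdist e (span E) \<le> norm (e + (1 / c) *\<^sub>R w)" by (simp add: dist_norm)
  then have "\<bar>c\<bar> * infdist e (span E) \<le> norm (c *\<^sub>R (e + (1 / c) *\<^sub>R w))"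
    by (simp add: mult_left_mono)
  with False show ?thesis by (simp add: scaleR_add_right)
qed auto

text \<open>The inductive step uses that the span of the smaller set is closed, so that the new
  vector has positive distance from it.\<close>

lemma independent_coefficients_bounded:
  fixes E :: "'a::banach set"
  assumes "finite E" "independent E"
  shows "\<exists>K\<ge>0. \<forall>a. (\<Sum>b\<in>E. \<bar>a b\<bar>) \<le> K * norm (\<Sum>b\<in>E. a b *\<^sub>R b)"
  using assms
proof (induction E rule: finite_induct)
  case (insert e E)
  have "independent E" using insert.prems by (meson independent_mono subset_insertI)
  then obtain K where K0: "K \<ge> 0" and K: "\<And>a. (\<Sum>b\<in>E. \<bar>a b\<bar>) \<le> K * norm (\<Sum>b\<in>E. a b *\<^sub>R b)"
    using insert.IH by blast
  have "e \<notin> span E" using insert.prems insert.hyps(2) by (simp add: independent_insert)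
  then have d: "infdist e (span E) > 0"
    using infdist_pos_not_in_closed[OF closed_span_if_coefficients_bounded[OF insert.hyps(1) K0 K]]
      span_zero by blast
  define D where "D = (1 + K * norm e) / infdist e (span E) + K"
  have "(\<Sum>b\<in>insert e E. \<bar>a b\<bar>) \<le> D * norm (\<Sum>b\<in>insert e E. a b *\<^sub>R b)" for a
  proof -
    define w where "w = (\<Sum>b\<in>E. a b *\<^sub>R b)"
    define x where "x = a e *\<^sub>R e + w"
    have ae: "\<bar>a e\<bar> \<le> norm x / infdist e (span E)"
      using abs_scaleR_infdist_le_norm[of w E "a e" e] d
      by (simp add: x_def w_def span_sum span_scale span_base pos_le_divide_eq)
    have "norm w \<le> norm x + \<bar>a e\<bar> * norm e"
      using norm_triangle_ineq4[of x "a e *\<^sub>R e"] by (simp add: x_def)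
    then have "K * norm w \<le> K * (norm x + \<bar>a e\<bar> * norm e)"
      using K0 by (rule mult_left_mono)
    then have "(\<Sum>b\<in>E. \<bar>a b\<bar>) \<le> K * (norm x + \<bar>a e\<bar> * norm e)"
      using K[of a] by (simp add: w_def)
    then have "(\<Sum>b\<in>insert e E. \<bar>a b\<bar>) \<le> \<bar>a e\<bar> * (1 + K * norm e) + K * norm x"
      using insert.hyps by (simp add: algebra_simps)
    also have "\<dots> \<le> (norm x / infdist e (span E)) * (1 + K * norm e) + K * norm x"
      using ae K0 by (intro add_right_mono mult_right_mono) auto
    also have "\<dots> = D * norm x" using d by (simp add: D_def field_simps)
    finally show ?thesis using insert.hyps by (simp add: x_def w_def)
  qed
  moreover have "D \<ge> 0" using d K0 by (simp add: D_def)
  ultimately show ?case by blast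
qed auto

lemma finite_span_bounded_coordinates:
  fixes S :: "'u::banach set"
  assumes "finite S" "span S = UNIV"
  obtains E and \<phi> :: "'u \<Rightarrow> 'u \<Rightarrow> real"
  where "finite E" "\<And>b. bounded_linear (\<phi> b)" "\<And>x. x = (\<Sum>b\<in>E. \<phi> b x *\<^sub>R b)"
proof -
  obtain E where E: "E \<subseteq> S" "independent E" "S \<subseteq> span E"
    using maximal_independent_subset[of S] by blast
  have fin: "finite E" using E(1) assms(1) finite_subset by blast
  have spE: "span E = UNIV" using E(3) assms(2) by (metis span_mono span_span top.extremum_uniqueI)
  obtain K where K0: "K \<ge> 0" and K: "\<And>a. (\<Sum>b\<in>E. \<bar>a b\<bar>) \<le> K * norm (\<Sum>b\<in>E. a b *\<^sub>R b)"
    using independent_coefficients_bounded[OF fin E(2)] by blast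
  define \<phi> where "\<phi> b x = representation E x b" for b x
  have rep: "x = (\<Sum>b\<in>E. \<phi> b x *\<^sub>R b)" for x
    unfolding \<phi>_def using sum_representation_eq[OF E(2) _ fin] spE by simp
  have "\<bar>\<phi> b x\<bar> \<le> K * norm x" for b x
  proof (cases "b \<in> E")
    case True
    have "\<bar>\<phi> b x\<bar> \<le> (\<Sum>b\<in>E. \<bar>\<phi> b x\<bar>)" using True fin by (intro member_le_sum) auto
    also have "\<dots> \<le> K * norm x" using K[of "\<lambda>b. \<phi> b x"] rep[of x] by simp
    finally show ?thesis .
  next
    case False
    then have "\<phi> b x = 0" unfolding \<phi>_def by (meson representation_ne_zero)
    then show ?thesis by (simp add: K0)
  qed
  then have bl: "bounded_linear (\<phi> b)" for b
  proof (intro bounded_linear_intro[of _ K])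
    show "\<phi> b (x + y) = \<phi> b x + \<phi> b y" for x y
      unfolding \<phi>_def using representation_add[OF E(2)] spE by simp
    show "\<phi> b (r *\<^sub>R x) = r *\<^sub>R \<phi> b x" for r x
      unfolding \<phi>_def using representation_scale[OF E(2)] spE by simp
  qed (simp add: mult.commute)
  show ?thesis by (rule that[OF fin bl rep])
qed

lemma bounded_linear_family_pos_bounded:
  assumes "\<And>b. bounded_linear (\<phi> b)"
  obtains K where "\<And>b. K b > 0" "\<And>b x. norm (\<phi> b x) \<le> K b * norm x"
proof -
  from choice[OF allI[OF bounded_linear.pos_bounded[OF assms]]] obtain K
    where "\<forall>b. K b > 0 \<and> (\<forall>x. norm (\<phi> b x) \<le> norm x * K b)" ..
  then show ?thesis using that[of K] by (simp add: mult.commute)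
qed

section \<open>Comparison functions\<close>

lemma classK_mono:
  assumes "classK \<mu>" "0 \<le> x" "x \<le> y"
  shows "\<mu> x \<le> \<mu> y"
proof (cases "x = y")
  case False
  then have "\<mu> x < \<mu> y"
    using assms strict_mono_onD[of "{0..}" \<mu> x y] unfolding classK_def by simp
  then show ?thesis by simp
qed simp

lemma classK_nonneg:
  assumes "classK \<mu>" "0 \<le> x"
  shows "0 \<le> \<mu> x"
  using classK_mono[OF assms(1) order_refl assms(2)] assms(1) by (simp add: classK_def)

lemma classKL_zero:
  assumes "classKL \<beta>" "t \<ge> 0"
  shows "\<beta> 0 t = 0"
  using assms by (simp add: classKL_def classK_def)

lemma classK_scale:
  assumes K: "classK \<mu>" and C: "C > 0"
  shows "classK (\<lambda>r. \<mu> (C * r))"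
proof -
  have "continuous_on {0..} \<mu>" "strict_mono_on {0..} \<mu>" "\<mu> 0 = 0"
    using K by (auto simp: classK_def)
  moreover have "(\<lambda>r. C * r) ` {0..} \<subseteq> {0..}" using C by auto
  ultimately have "continuous_on {0..} (\<lambda>r. \<mu> (C * r))"
    and "strict_mono_on {0..} (\<lambda>r. \<mu> (C * r))" and "\<mu> (C * 0) = 0"
    using C by (auto intro!: continuous_on_compose2[of "{0..}" \<mu>] continuous_intros
        strict_mono_onI strict_mono_onD[of "{0..}" \<mu>])
  then show ?thesis by (simp add: classK_def)
qed

lemma classKinf_scale:
  assumes K: "classKinf \<mu>" and C: "C > 0"
  shows "classKinf (\<lambda>r. \<mu> (C * r))"
proof -
  have "filterlim (\<lambda>r::real. C * r) at_top at_top"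
    by (rule filterlim_tendsto_pos_mult_at_top[OF tendsto_const C filterlim_ident])
  moreover have "filterlim \<mu> at_top at_top" using K by (simp add: classKinf_def)
  ultimately have "filterlim (\<lambda>r. \<mu> (C * r)) at_top at_top"
    by (rule filterlim_compose[rotated])
  then show ?thesis using classK_scale[OF _ C] K by (simp add: classKinf_def)
qed

lemma classKinf_id_plus_sum:
  assumes K: "\<And>b. b \<in> E \<Longrightarrow> classK (\<mu> b)"
  shows "classKinf (\<lambda>r. r + (\<Sum>b\<in>E. \<mu> b r))"
proof -
  have "continuous_on {0..} (\<lambda>r. r + (\<Sum>b\<in>E. \<mu> b r))"
    using K by (intro continuous_intros) (auto simp: classK_def)
  moreover have "strict_mono_on {0..} (\<lambda>r. r + (\<Sum>b\<in>E. \<mu> b r))"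
  proof (rule strict_mono_onI)
    fix r s :: real assume "r \<in> {0..}" "s \<in> {0..}" "r < s"
    then show "r + (\<Sum>b\<in>E. \<mu> b r) < s + (\<Sum>b\<in>E. \<mu> b s)"
      using classK_mono[OF K] by (intro add_less_le_mono sum_mono) auto
  qed
  moreover have "\<forall>\<^sub>F r in at_top. r \<le> r + (\<Sum>b\<in>E. \<mu> b r)"
    using eventually_ge_at_top[of "0::real"]
  proof (rule eventually_mono)
    show "r \<le> r + (\<Sum>b\<in>E. \<mu> b r)" if "0 \<le> r" for r
      using that classK_nonneg[OF K] by (simp add: sum_nonneg)
  qed
  then have "filterlim (\<lambda>r. r + (\<Sum>b\<in>E. \<mu> b r)) at_top at_top"
    by (rule filterlim_at_top_mono[OF filterlim_ident])
  ultimately show ?thesis using K by (simp add: classKinf_def classK_def)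
qed

lemma classK_le_id_plus_sum:
  assumes K: "\<And>b. b \<in> E \<Longrightarrow> classK (\<mu> b)" and fin: "finite E" and b: "b \<in> E" and r: "r \<ge> 0"
  shows "\<mu> b r \<le> r + (\<Sum>b\<in>E. \<mu> b r)"
proof -
  have "\<mu> b r \<le> (\<Sum>b\<in>E. \<mu> b r)"
    using fin b r by (intro member_le_sum classK_nonneg[OF K]) auto
  then show ?thesis using r by simp
qed

lemma classKL_bound_imp_uniform_bound:
  fixes T :: "real \<Rightarrow> 'a::real_normed_vector \<Rightarrow> 'b::real_normed_vector"
  assumes KL: "classKL \<beta>" and lin: "\<And>t. t \<ge> 0 \<Longrightarrow> linear (T t)"
    and bound: "\<And>t x. t \<ge> 0 \<Longrightarrow> norm (T t x) \<le> \<beta> (norm x) t"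
  obtains M where "M \<ge> 0" "\<And>t x. t \<ge> 0 \<Longrightarrow> norm (T t x) \<le> M * norm x"
proof -
  have K: "classK (\<lambda>s. \<beta> s 0)" and L: "classL (\<beta> 1)" using KL by (auto simp: classKL_def)
  have decr: "\<beta> 1 t \<le> \<beta> 1 0" if "t \<ge> 0" for t
  proof (cases "t = 0")
    case False
    with that L have "\<beta> 1 t < \<beta> 1 0" unfolding classL_def by simp
    then show ?thesis by simp
  qed simp
  have "norm (T t x) \<le> \<beta> 1 0 * norm x" if t: "t \<ge> 0" for t x
  proof (cases "x = 0")
    case True
    then show ?thesis using lin[OF t] by (simp add: linear_0)
  next
    case False
    have "T t x = norm x *\<^sub>R T t ((1 / norm x) *\<^sub>R x)"
      using False lin[OF t] by (simp add: linear_scale)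
    moreover have "norm (T t ((1 / norm x) *\<^sub>R x)) \<le> \<beta> 1 0"
      using bound[OF t, of "(1 / norm x) *\<^sub>R x"] decr[OF t] False by simp
    ultimately show ?thesis by (simp add: mult.commute mult_left_mono)
  qed
  moreover have "\<beta> 1 0 \<ge> 0" using classK_nonneg[OF K, of 1] by simp
  ultimately show ?thesis by (intro that)
qed

section \<open>Input function spaces\<close>

lemma meas_on_bounded_linear:
  assumes "bounded_linear L" "meas_on t u"
  shows "meas_on t (\<lambda>s. L (u s))"
  using assms linear_continuous_on borel_measurable_continuous_on
  unfolding meas_on_def by blast

lemma meas_on_const: "meas_on t (\<lambda>s. c)"
  by (simp add: meas_on_def)

lemma borel_measurable_times_indicator:
  assumes "f \<in> borel_measurable (restrict_space lebesgue {0..t::real})"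
  shows "(\<lambda>s. f s * indicator {0..t} s :: ennreal) \<in> borel_measurable lebesgue"
  using assms by (subst borel_measurable_restrict_space_iff_ennreal[symmetric]) auto

lemma continuous_on_max_0:
  fixes f :: "real \<Rightarrow> 'a::topological_space"
  assumes "continuous_on {0..} f"
  shows "continuous_on UNIV (\<lambda>x. f (max 0 x))"
  by (rule continuous_on_compose2[OF assms]) (auto intro: continuous_intros)

lemma Inf_le_scaled_Inf:
  fixes Su Sv :: "real set"
  assumes ne: "Su \<noteq> {}" and bdd: "bdd_below Sv" and C: "C > 0"
    and sub: "\<And>k. k \<in> Su \<Longrightarrow> C * k \<in> Sv"
  shows "Inf Sv \<le> C * Inf Su"
proof -
  have "Inf Sv / C \<le> Inf Su"
  proof (rule cInf_greatest[OF ne])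
    fix k assume "k \<in> Su"
    then have "Inf Sv \<le> C * k" using cInf_lower[OF sub bdd] by blast
    then show "Inf Sv / C \<le> k" using C by (simp add: pos_divide_le_eq mult.commute)
  qed
  then show ?thesis using C by (simp add: pos_divide_le_eq mult.commute)
qed

lemma Young_0:
  assumes "Young \<Phi>"
  shows "\<Phi> 0 = 0"
proof -
  have lim: "(\<Phi> \<longlongrightarrow> \<Phi> 0) (at_right 0)"
    using assms by (auto simp: Young_def continuous_on_def intro: tendsto_within_subset)
  have "((\<lambda>x. x * (\<Phi> x / x)) \<longlongrightarrow> 0 * 0) (at_right (0::real))"
    using assms by (intro tendsto_mult tendsto_ident_at) (simp add: Young_def)
  moreover have "\<forall>\<^sub>F x in at_right 0. x * (\<Phi> x / x) = \<Phi> x"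
    by (rule eventually_mono[OF eventually_at_right_less[of "0::real"]]) simp
  ultimately have "(\<Phi> \<longlongrightarrow> 0) (at_right 0)"
    using Lim_transform_eventually by fastforce
  with lim show ?thesis using tendsto_unique[OF trivial_limit_at_right_real] by blast
qed

lemma Young_mono:
  assumes "Young \<Phi>" "0 \<le> x" "x \<le> y"
  shows "\<Phi> x \<le> \<Phi> y"
proof -
  have "mono_on {0..} \<Phi>" using assms(1) by (simp add: Young_def)
  then show ?thesis using assms(2,3) by (simp add: mono_onD)
qed

lemma Young_dominates_identity:
  assumes "Young \<Phi>"
  obtains R where "R > 0" "\<And>x. x \<ge> 0 \<Longrightarrow> x \<le> R + \<Phi> x"
proof -
  have "\<forall>\<^sub>F x in at_top. 1 \<le> \<Phi> x / x"
    using assms by (simp add: Young_def filterlim_at_top)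
  then obtain N where N: "\<And>x. x \<ge> N \<Longrightarrow> 1 \<le> \<Phi> x / x"
    by (auto simp: eventually_at_top_linorder)
  have "x \<le> max N 1 + \<Phi> x" if "x \<ge> 0" for x
  proof (cases "x \<ge> max N 1")
    case True
    then have "x \<le> \<Phi> x" using N[of x] by (simp add: le_divide_eq)
    then show ?thesis by linarith
  next
    case False
    have "0 \<le> \<Phi> x" using assms that by (simp add: Young_def)
    with False show ?thesis by linarith
  qed
  then show ?thesis using that[of "max N 1"] by simp
qed

lemma Linf_mem_dominated:
  fixes u :: "real \<Rightarrow> 'a::real_normed_vector" and v :: "real \<Rightarrow> 'b::real_normed_vector"
  assumes C: "C > 0" and dom: "\<And>s. norm (v s) \<le> C * norm (u s)" and v: "meas_on t v"
    and u: "Linf_mem t u"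
  shows "Linf_mem t v \<and> Linf_norm t v \<le> C * Linf_norm t u"
proof -
  let ?S = "\<lambda>u :: real \<Rightarrow> _. {D. 0 \<le> D \<and> (AE s in lebesgue. s \<in> {0..t} \<longrightarrow> norm (u s) \<le> D)}"
  have scaled: "C * D \<in> ?S v" if "D \<in> ?S u" for D
  proof -
    have "norm (v s) \<le> C * D" if "norm (u s) \<le> D" for s
      using dom[of s] mult_left_mono[OF that] C by (meson less_imp_le order_trans)
    then have "AE s in lebesgue. s \<in> {0..t} \<longrightarrow> norm (v s) \<le> C * D"
      using \<open>D \<in> ?S u\<close> by (auto elim: AE_mp)
    with \<open>D \<in> ?S u\<close> C show ?thesis by simp
  qed
  obtain D where D: "AE s in lebesgue. s \<in> {0..t} \<longrightarrow> norm (u s) \<le> D"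
    using u by (auto simp: Linf_mem_def)
  have "AE s in lebesgue. s \<in> {0..t} \<longrightarrow> norm (u s) \<le> max D 0"
    by (rule AE_mp[OF D]) (rule AE_I2, auto)
  then have "max D 0 \<in> ?S u" by simp
  then have "Linf_mem t v" using scaled[of "max D 0"] v by (auto simp: Linf_mem_def)
  moreover have "Inf (?S v) \<le> C * Inf (?S u)"
  proof (rule Inf_le_scaled_Inf[OF _ _ C scaled])
    show "?S u \<noteq> {}" using \<open>max D 0 \<in> ?S u\<close> by blast
  qed (auto intro: bdd_belowI[of _ 0])
  ultimately show ?thesis by (simp add: Linf_norm_def)
qed

lemma L1_mem_dominated:
  fixes u :: "real \<Rightarrow> 'a::real_normed_vector" and v :: "real \<Rightarrow> 'b::real_normed_vector"
  assumes C: "C > 0" and dom: "\<And>s. norm (v s) \<le> C * norm (u s)" and v: "meas_on t v"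
    and u: "L1_mem t u"
  shows "L1_mem t v \<and> L1_norm t v \<le> C * L1_norm t u"
proof -
  let ?I = "\<lambda>u :: real \<Rightarrow> _. \<integral>\<^sup>+ s. ennreal (norm (u s)) * indicator {0..t} s \<partial>lebesgue"
  have "u \<in> borel_measurable (restrict_space lebesgue {0..t})"
    using u by (simp add: L1_mem_def meas_on_def)
  then have m: "(\<lambda>s. ennreal (norm (u s)) * indicator {0..t} s) \<in> borel_measurable lebesgue"
    by (intro borel_measurable_times_indicator) measurable
  have "?I v \<le> (\<integral>\<^sup>+ s. ennreal C * (ennreal (norm (u s)) * indicator {0..t} s) \<partial>lebesgue)"
    using dom C by (intro nn_integral_mono)
      (auto split: split_indicator simp flip: ennreal_mult intro: ennreal_leI)
  also have "\<dots> = ennreal C * ?I u" by (rule nn_integral_cmult[OF m])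
  finally have le: "?I v \<le> ennreal C * ?I u" .
  moreover have fin: "ennreal C * ?I u < \<infinity>"
    using u by (simp add: L1_mem_def ennreal_mult_less_top)
  ultimately have "L1_mem t v" using v by (auto simp: L1_mem_def)
  moreover have "L1_norm t v \<le> C * L1_norm t u"
    unfolding L1_norm_def using enn2real_mono[OF le] fin C by (simp add: enn2real_mult)
  ultimately show ?thesis by blast
qed

lemma orlicz_ok_dominated:
  assumes Y: "Young \<Phi>" and C: "C > 0" and dom: "\<And>s. norm (v s) \<le> C * norm (u s)"
    and ok: "orlicz_ok \<Phi> t u k"
  shows "orlicz_ok \<Phi> t v (C * k)"
proof -
  have k: "k > 0" using ok by (simp add: orlicz_ok_def)
  have "\<Phi> (norm (v s) / (C * k)) \<le> \<Phi> (norm (u s) / k)" for s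
  proof (rule Young_mono[OF Y])
    have "norm (v s) / (C * k) \<le> C * norm (u s) / (C * k)"
      using dom[of s] C k by (intro divide_right_mono) auto
    then show "norm (v s) / (C * k) \<le> norm (u s) / k" using C by simp
  qed (use C k in auto)
  then have "(\<integral>\<^sup>+ s. ennreal (\<Phi> (norm (v s) / (C * k))) * indicator {0..t} s \<partial>lebesgue)
      \<le> (\<integral>\<^sup>+ s. ennreal (\<Phi> (norm (u s) / k)) * indicator {0..t} s \<partial>lebesgue)"
    by (intro nn_integral_mono) (auto split: split_indicator intro: ennreal_leI)
  also have "\<dots> \<le> 1" using ok by (simp add: orlicz_ok_def)
  finally show ?thesis using C k by (simp add: orlicz_ok_def)
qed

lemma LPhi_mem_dominated:
  assumes Y: "Young \<Phi>" and C: "C > 0" and dom: "\<And>s. norm (v s) \<le> C * norm (u s)"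
    and v: "meas_on t v" and u: "LPhi_mem \<Phi> t u"
  shows "LPhi_mem \<Phi> t v \<and> LPhi_norm \<Phi> t v \<le> C * LPhi_norm \<Phi> t u"
proof -
  obtain k where k: "orlicz_ok \<Phi> t u k" using u by (auto simp: LPhi_mem_def)
  have "LPhi_mem \<Phi> t v" using orlicz_ok_dominated[OF Y C dom k] v by (auto simp: LPhi_mem_def)
  moreover have "Inf {k. orlicz_ok \<Phi> t v k} \<le> C * Inf {k. orlicz_ok \<Phi> t u k}"
    using k orlicz_ok_dominated[OF Y C dom]
    by (intro Inf_le_scaled_Inf[OF _ _ C]) (auto simp: orlicz_ok_def intro: bdd_belowI[of _ 0])
  ultimately show ?thesis by (simp add: LPhi_norm_def)
qed

lemma EPhi_mem_bounded_linear:
  fixes L :: "'a::real_normed_vector \<Rightarrow> 'b::real_normed_vector"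
  assumes Y: "Young \<Phi>" and L: "bounded_linear L" and C: "C > 0"
    and LC: "\<And>x. norm (L x) \<le> C * norm x" and u: "EPhi_mem \<Phi> t u"
  shows "EPhi_mem \<Phi> t (\<lambda>s. L (u s)) \<and> LPhi_norm \<Phi> t (\<lambda>s. L (u s)) \<le> C * LPhi_norm \<Phi> t u"
proof -
  have uL: "LPhi_mem \<Phi> t u" using u by (simp add: EPhi_mem_def)
  have "\<exists>w. Linf_mem t w \<and> LPhi_mem \<Phi> t (\<lambda>s. L (u s) - w s) \<and> LPhi_norm \<Phi> t (\<lambda>s. L (u s) - w s) < \<epsilon>"
    if "\<epsilon> > 0" for \<epsilon>
  proof -
    obtain v where v: "Linf_mem t v" "LPhi_mem \<Phi> t (\<lambda>s. u s - v s)"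
      "LPhi_norm \<Phi> t (\<lambda>s. u s - v s) < \<epsilon> / C"
      using u \<open>\<epsilon> > 0\<close> C unfolding EPhi_mem_def by (meson divide_pos_pos)
    have "(\<lambda>s. L (u s) - L (v s)) = (\<lambda>s. L (u s - v s))"
      using L by (simp add: linear_diff bounded_linear.linear)
    moreover have "LPhi_mem \<Phi> t (\<lambda>s. L (u s - v s))"
      and "LPhi_norm \<Phi> t (\<lambda>s. L (u s - v s)) \<le> C * LPhi_norm \<Phi> t (\<lambda>s. u s - v s)"
      using LPhi_mem_dominated[OF Y C LC meas_on_bounded_linear[OF L] v(2)] v(2)
      by (auto simp: LPhi_mem_def)
    moreover have "C * LPhi_norm \<Phi> t (\<lambda>s. u s - v s) < \<epsilon>"
      using v(3) C by (simp add: pos_less_divide_eq mult.commute)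
    moreover have "Linf_mem t (\<lambda>s. L (v s))"
      using Linf_mem_dominated[OF C LC meas_on_bounded_linear[OF L] v(1)] v(1)
      by (auto simp: Linf_mem_def)
    ultimately show ?thesis by (intro exI[of _ "\<lambda>s. L (v s)"]) auto
  qed
  then show ?thesis
    using LPhi_mem_dominated[OF Y C LC meas_on_bounded_linear[OF L] uL] uL
    by (auto simp: EPhi_mem_def LPhi_mem_def)
qed

definition admissible_Zspace :: "Zspace \<Rightarrow> bool" where
  "admissible_Zspace Z \<longleftrightarrow> (\<exists>\<Phi>. Young \<Phi> \<and> Z = EPhi \<Phi>) \<or> Z = L1 \<or> Z = Linfty"

lemma Z_mem_bounded_linear:
  fixes L :: "'a::real_normed_vector \<Rightarrow> 'b::real_normed_vector"
  assumes Z: "admissible_Zspace Z" and L: "bounded_linear L" and C: "C > 0"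
    and LC: "\<And>x. norm (L x) \<le> C * norm x" and u: "Z_mem Z t u"
  shows "Z_mem Z t (\<lambda>s. L (u s)) \<and> Z_norm Z t (\<lambda>s. L (u s)) \<le> C * Z_norm Z t u"
  using Z unfolding admissible_Zspace_def
proof (elim disjE exE conjE)
  fix \<Phi> assume "Young \<Phi>" and "Z = EPhi \<Phi>"
  then show ?thesis using EPhi_mem_bounded_linear[OF _ L C LC] u by simp
next
  assume "Z = L1"
  then show ?thesis using L1_mem_dominated[OF C LC meas_on_bounded_linear[OF L]] u
    by (simp add: L1_mem_def)
next
  assume "Z = Linfty"
  then show ?thesis using Linf_mem_dominated[OF C LC meas_on_bounded_linear[OF L]] u
    by (simp add: Linf_mem_def)
qed

lemma Z_norm_nonneg:
  assumes Z: "admissible_Zspace Z" and u: "Z_mem Z t u"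
  shows "0 \<le> Z_norm Z t u"
  using Z unfolding admissible_Zspace_def
proof (elim disjE exE conjE)
  fix \<Phi> assume "Z = EPhi \<Phi>"
  then obtain k where "orlicz_ok \<Phi> t u k" using u by (auto simp: EPhi_mem_def LPhi_mem_def)
  then show ?thesis using \<open>Z = EPhi \<Phi>\<close>
    by (auto simp: LPhi_norm_def orlicz_ok_def intro!: cInf_greatest)
next
  assume "Z = Linfty"
  then obtain D where D: "AE s in lebesgue. s \<in> {0..t} \<longrightarrow> norm (u s) \<le> D"
    using u by (auto simp: Linf_mem_def)
  have "AE s in lebesgue. s \<in> {0..t} \<longrightarrow> norm (u s) \<le> max D 0"
    by (rule AE_mp[OF D]) (rule AE_I2, auto)
  then show ?thesis using \<open>Z = Linfty\<close> by (auto simp: Linf_norm_def intro!: cInf_greatest)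
qed (simp add: L1_norm_def)

lemma Z_mem_zero:
  assumes Z: "admissible_Zspace Z"
  shows "Z_mem Z t (\<lambda>s. 0::'a::real_normed_vector)" and "Z_norm Z t (\<lambda>s. 0::'a) = 0"
proof -
  have L1: "L1_mem t (\<lambda>s. 0::'a)" "L1_norm t (\<lambda>s. 0::'a) = 0"
    by (simp_all add: L1_mem_def L1_norm_def meas_on_const)
  have S: "{C. 0 \<le> C \<and> (AE s in lebesgue. s \<in> {0..t} \<longrightarrow> norm (0::'a) \<le> C)} = {0..}"
    by auto
  have Linf: "Linf_mem t (\<lambda>s. 0::'a)" "Linf_norm t (\<lambda>s. 0::'a) = 0"
    unfolding Linf_mem_def Linf_norm_def S using meas_on_const by auto
  have EPhi: "EPhi_mem \<Phi> t (\<lambda>s. 0::'a)" "LPhi_norm \<Phi> t (\<lambda>s. 0::'a) = 0" if "Young \<Phi>" for \<Phi>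
  proof -
    have ok: "orlicz_ok \<Phi> t (\<lambda>s. 0::'a) k \<longleftrightarrow> 0 < k" for k
      by (simp add: orlicz_ok_def Young_0[OF that])
    then have "{k. orlicz_ok \<Phi> t (\<lambda>s. 0::'a) k} = {0<..}" by auto
    then show "LPhi_norm \<Phi> t (\<lambda>s. 0::'a) = 0" by (simp add: LPhi_norm_def)
    moreover have "LPhi_mem \<Phi> t (\<lambda>s. 0::'a)"
      using ok[of 1] meas_on_const by (auto simp: LPhi_mem_def)
    ultimately show "EPhi_mem \<Phi> t (\<lambda>s. 0::'a)"
      using Linf(1) by (auto simp: EPhi_mem_def intro!: exI[of _ "\<lambda>s. 0"])
  qed
  show "Z_mem Z t (\<lambda>s. 0::'a)" "Z_norm Z t (\<lambda>s. 0::'a) = 0"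
    using Z L1 Linf EPhi by (auto simp: admissible_Zspace_def)
qed

lemma Linf_mem_imp_L1_mem:
  assumes "Linf_mem t u"
  shows "L1_mem t u"
proof -
  obtain D where D: "AE s in lebesgue. s \<in> {0..t} \<longrightarrow> norm (u s) \<le> D"
    using assms by (auto simp: Linf_mem_def)
  have "(\<integral>\<^sup>+ s. ennreal (norm (u s)) * indicator {0..t} s \<partial>lebesgue)
      \<le> (\<integral>\<^sup>+ s. ennreal (max D 0) * indicator {0..t} s \<partial>lebesgue)"
    by (rule nn_integral_mono_AE, rule AE_mp[OF D], rule AE_I2)
      (auto split: split_indicator intro: ennreal_leI)
  also have "\<dots> < \<infinity>"
    by (simp add: nn_integral_cmult_indicator ennreal_mult_less_top emeasure_lborel_Icc_eq)
  finally show ?thesis using assms by (simp add: L1_mem_def Linf_mem_def)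
qed

text \<open>Superlinearity of \<open>\<Phi>\<close> gives \<open>\<bar>x\<bar> \<le> k R + k \<Phi>(\<bar>x\<bar>/k)\<close>.\<close>

lemma LPhi_mem_imp_L1_mem:
  assumes Y: "Young \<Phi>" and u: "LPhi_mem \<Phi> t u"
  shows "L1_mem t u"
proof -
  obtain k where k: "orlicz_ok \<Phi> t u k" and um: "meas_on t u" using u by (auto simp: LPhi_mem_def)
  have k0: "k > 0" using k by (simp add: orlicz_ok_def)
  obtain R where R: "R > 0" "\<And>x. x \<ge> 0 \<Longrightarrow> x \<le> R + \<Phi> x" using Young_dominates_identity[OF Y] by blast
  let ?\<Phi>u = "\<lambda>s. ennreal (\<Phi> (norm (u s) / k)) * indicator {0..t} s"
  have "(\<lambda>s. \<Phi> (max 0 (norm (u s) / k))) \<in> borel_measurable (restrict_space lebesgue {0..t})"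
    using Y um unfolding meas_on_def Young_def
    by (intro borel_measurable_continuous_on[OF continuous_on_max_0]) auto
  then have m: "?\<Phi>u \<in> borel_measurable lebesgue"
    using k0 by (intro borel_measurable_times_indicator) simp
  have "ennreal (norm (u s)) \<le> ennreal (k * R) + ennreal k * ennreal (\<Phi> (norm (u s) / k))" for s
  proof -
    have "norm (u s) \<le> k * R + k * \<Phi> (norm (u s) / k)"
      using R(2)[of "norm (u s) / k"] k0 by (simp add: divide_le_eq algebra_simps)
    moreover have "0 \<le> \<Phi> (norm (u s) / k)" using Y k0 by (simp add: Young_def)
    ultimately show ?thesis using k0 R(1) by (simp flip: ennreal_plus ennreal_mult add: ennreal_leI)
  qed
  then have "(\<integral>\<^sup>+ s. ennreal (norm (u s)) * indicator {0..t} s \<partial>lebesgue)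
      \<le> (\<integral>\<^sup>+ s. ennreal (k * R) * indicator {0..t} s + ennreal k * ?\<Phi>u s \<partial>lebesgue)"
    by (intro nn_integral_mono) (auto split: split_indicator)
  also have "\<dots> = ennreal (k * R) * emeasure lebesgue {0..t} + ennreal k * integral\<^sup>N lebesgue ?\<Phi>u"
    using m by (subst nn_integral_add)
      (auto simp: nn_integral_cmult nn_integral_cmult_indicator intro: borel_measurable_times_indicator)
  also have "\<dots> < \<infinity>"
    using k by (simp add: orlicz_ok_def ennreal_add_less_top ennreal_mult_less_top
        emeasure_lborel_Icc_eq le_less_trans[OF _ ennreal_one_less_top])
  finally show ?thesis using um by (simp add: L1_mem_def)
qed

lemma Z_mem_imp_L1_mem:
  assumes "admissible_Zspace Z" "Z_mem Z t u"
  shows "L1_mem t u"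
  using assms LPhi_mem_imp_L1_mem Linf_mem_imp_L1_mem
  by (auto simp: admissible_Zspace_def EPhi_mem_def)

lemma L1_mem_imp_integrable_on:
  fixes w :: "real \<Rightarrow> real"
  assumes "L1_mem t w"
  shows "w integrable_on {0..t}" and "(\<lambda>s. \<bar>w s\<bar>) integrable_on {0..t}"
proof -
  have "w \<in> borel_measurable (restrict_space lebesgue {0..t})"
    using assms by (simp add: L1_mem_def meas_on_def)
  then have "(\<lambda>x. indicator {0..t} x *\<^sub>R w x) \<in> borel_measurable lebesgue"
    by (subst borel_measurable_restrict_space_iff[symmetric]) auto
  moreover have "(\<integral>\<^sup>+ x. ennreal (norm (indicator {0..t} x *\<^sub>R w x)) \<partial>lebesgue)
      = (\<integral>\<^sup>+ s. ennreal (norm (w s)) * indicator {0..t} s \<partial>lebesgue)"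
    by (intro nn_integral_cong) (auto split: split_indicator)
  ultimately have a: "w absolutely_integrable_on {0..t}"
    using assms by (simp add: L1_mem_def absolutely_integrable_on_def set_integrable_def
        integrable_iff_bounded)
  then show "w integrable_on {0..t}" using set_lebesgue_integral_eq_integral(1) by blast
  show "(\<lambda>s. \<bar>w s\<bar>) integrable_on {0..t}"
    using set_lebesgue_integral_eq_integral(1)[OF absolutely_integrable_norm[OF a]] by (simp add: o_def)
qed

lemma Linf_mem_classK_L1_mem:
  assumes w: "Linf_mem t w" and K: "classK \<mu>"
  shows "L1_mem t (\<lambda>s. \<mu> (norm (w s)))"
proof -
  have "meas_on t (\<lambda>s. \<mu> (max 0 (norm (w s))))"
    using w K unfolding Linf_mem_def meas_on_def classK_def
    by (intro borel_measurable_continuous_on[OF continuous_on_max_0]) auto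
  moreover have "\<mu> (norm (w s)) \<le> \<mu> (max D 0)" if "norm (w s) \<le> D" for s D
    using that by (intro classK_mono[OF K]) auto
  then have "Linf_mem t (\<lambda>s. \<mu> (norm (w s)))"
    using w classK_nonneg[OF K] calculation
    by (fastforce simp: Linf_mem_def elim!: AE_mp intro: exI[of _ "\<mu> (max _ 0)"])
  then show ?thesis by (rule Linf_mem_imp_L1_mem)
qed

section \<open>Integrability of products with continuous functions\<close>

definition integrably_approximable :: "(real \<Rightarrow> 'a::banach) \<Rightarrow> (real \<Rightarrow> real) \<Rightarrow> real set \<Rightarrow> bool"
  where "integrably_approximable f w S \<longleftrightarrow>
    (\<exists>h. h integrable_on S \<and> (\<forall>s\<in>S. norm (f s - h s) \<le> w s))"

lemma norm_tagged_sum_diff_le: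
  fixes f h :: "'a::euclidean_space \<Rightarrow> 'b::real_normed_vector"
  assumes D: "D tagged_division_of S" and le: "\<And>x. x \<in> S \<Longrightarrow> norm (f x - h x) \<le> k x"
  shows "norm ((\<Sum>(x, L)\<in>D. measure lborel L *\<^sub>R f x) - (\<Sum>(x, L)\<in>D. measure lborel L *\<^sub>R h x))
    \<le> (\<Sum>(x, L)\<in>D. measure lborel L * k x)"
proof -
  have "(\<Sum>(x, L)\<in>D. measure lborel L *\<^sub>R f x) - (\<Sum>(x, L)\<in>D. measure lborel L *\<^sub>R h x)
      = (\<Sum>(x, L)\<in>D. measure lborel L *\<^sub>R (f x - h x))"
    by (simp add: sum_subtractf[symmetric] case_prod_beta scaleR_diff_right)
  also have "norm \<dots> \<le> (\<Sum>(x, L)\<in>D. norm (measure lborel L *\<^sub>R (f x - h x)))"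
    using norm_sum[of "\<lambda>(x, L). measure lborel L *\<^sub>R (f x - h x)" D]
    by (simp only: case_prod_unfold)
  also have "\<dots> \<le> (\<Sum>(x, L)\<in>D. measure lborel L * k x)"
  proof (rule sum_mono, clarify)
    fix x L assume "(x, L) \<in> D"
    then have "x \<in> S" using tagged_division_ofD(2,3)[OF D] by blast
    then show "norm (measure lborel L *\<^sub>R (f x - h x)) \<le> measure lborel L * k x"
      using le by (simp add: mult_left_mono)
  qed
  finally show ?thesis .
qed

lemma tagged_sum_bounded_if_integrable:
  fixes k :: "'a::euclidean_space \<Rightarrow> real"
  assumes "k integrable_on cbox a b"
  obtains \<gamma> where "gauge \<gamma>" "\<And>D. D tagged_division_of cbox a b \<Longrightarrow> \<gamma> fine D \<Longrightarrow>
    (\<Sum>(x, L)\<in>D. measure lborel L * k x) \<le> \<bar>integral (cbox a b) k\<bar> + 1"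
proof -
  obtain \<gamma> where "gauge \<gamma>" and \<gamma>: "\<And>D. D tagged_division_of cbox a b \<Longrightarrow> \<gamma> fine D \<Longrightarrow>
      norm ((\<Sum>(x, L)\<in>D. measure lborel L *\<^sub>R k x) - integral (cbox a b) k) < 1"
    using integrable_integral[OF assms, unfolded has_integral, rule_format, of 1] by auto
  moreover have "(\<Sum>(x, L)\<in>D. measure lborel L * k x) \<le> \<bar>integral (cbox a b) k\<bar> + 1"
    if "D tagged_division_of cbox a b" "\<gamma> fine D" for D
    using \<gamma>[OF that] by (simp add: case_prod_beta)
  ultimately show ?thesis using that by blast
qed

lemma norm_diff_triangle3:
  fixes a b c d :: "'a::real_normed_vector"
  shows "norm (a - d) \<le> norm (a - b) + norm (b - c) + norm (d - c)"
  using norm_triangle_ineq4[of "(a - b) + (b - c)" "d - c"] norm_triangle_ineq[of "a - b" "b - c"]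
  by (simp add: algebra_simps)

text \<open>A weighted variant of \<open>integrable_uniform_limit\<close>.\<close>

lemma integrable_weighted_limit:
  fixes f :: "real \<Rightarrow> 'a::banach"
  assumes k: "k integrable_on {a..b}"
    and approx: "\<And>\<epsilon>. \<epsilon> > 0 \<Longrightarrow> integrably_approximable f (\<lambda>s. \<epsilon> * k s) {a..b}"
  shows "f integrable_on {a..b}"
  unfolding cbox_interval[symmetric] integrable_Cauchy
proof (intro allI impI)
  fix e :: real assume e: "e > 0"
  let ?S = "\<lambda>D f. \<Sum>(x, L)\<in>D. measure lborel L *\<^sub>R f x"
  obtain \<gamma>k where "gauge \<gamma>k" and \<gamma>k: "\<And>D. D tagged_division_of cbox a b \<Longrightarrow> \<gamma>k fine D \<Longrightarrow>
      (\<Sum>(x, L)\<in>D. measure lborel L * k x) \<le> \<bar>integral (cbox a b) k\<bar> + 1"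
    using tagged_sum_bounded_if_integrable k by (metis cbox_interval)
  define e' where "e' = e / (4 * (\<bar>integral (cbox a b) k\<bar> + 1))"
  have "e' > 0" using e by (simp add: e'_def add_pos_nonneg)
  then obtain h where h: "h integrable_on cbox a b" "\<And>s. s \<in> cbox a b \<Longrightarrow> norm (f s - h s) \<le> e' * k s"
    using approx unfolding integrably_approximable_def cbox_interval by blast
  obtain \<gamma>h where "gauge \<gamma>h" and \<gamma>h: "\<And>D1 D2. D1 tagged_division_of cbox a b \<Longrightarrow> \<gamma>h fine D1 \<Longrightarrow>
      D2 tagged_division_of cbox a b \<Longrightarrow> \<gamma>h fine D2 \<Longrightarrow> norm (?S D1 h - ?S D2 h) < e / 3"
    using h(1)[unfolded integrable_Cauchy, rule_format, of "e / 3"] e by auto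
  have close: "norm (?S D f - ?S D h) \<le> e / 4" if D: "D tagged_division_of cbox a b" "\<gamma>k fine D" for D
  proof -
    have "norm (?S D f - ?S D h) \<le> (\<Sum>(x, L)\<in>D. measure lborel L * (e' * k x))"
      using D(1) h(2) by (rule norm_tagged_sum_diff_le)
    also have "\<dots> = e' * (\<Sum>(x, L)\<in>D. measure lborel L * k x)"
      by (simp add: sum_distrib_left case_prod_beta ac_simps)
    also have "\<dots> \<le> e' * (\<bar>integral (cbox a b) k\<bar> + 1)"
      using \<gamma>k[OF D] \<open>e' > 0\<close> by (intro mult_left_mono) auto
    also have "\<dots> = e / 4"
      using add_pos_nonneg[OF zero_less_one abs_ge_zero, of "integral (cbox a b) k"]
      by (simp add: e'_def field_simps)
    finally show ?thesis .
  qed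
  show "\<exists>\<gamma>. gauge \<gamma> \<and> (\<forall>D1 D2. D1 tagged_division_of cbox a b \<and> \<gamma> fine D1 \<and>
      D2 tagged_division_of cbox a b \<and> \<gamma> fine D2 \<longrightarrow> norm (?S D1 f - ?S D2 f) < e)"
  proof (intro exI[of _ "\<lambda>x. \<gamma>h x \<inter> \<gamma>k x"] conjI allI impI gauge_Int \<open>gauge \<gamma>h\<close> \<open>gauge \<gamma>k\<close>,
      elim conjE)
    fix D1 D2
    assume "D1 tagged_division_of cbox a b" "(\<lambda>x. \<gamma>h x \<inter> \<gamma>k x) fine D1"
      "D2 tagged_division_of cbox a b" "(\<lambda>x. \<gamma>h x \<inter> \<gamma>k x) fine D2"
    then have "norm (?S D1 f - ?S D1 h) \<le> e / 4" "norm (?S D2 f - ?S D2 h) \<le> e / 4"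
      and "norm (?S D1 h - ?S D2 h) < e / 3"
      using close \<gamma>h by (auto simp: fine_Int)
    then show "norm (?S D1 f - ?S D2 f) < e"
      using norm_diff_triangle3[of "?S D1 f" "?S D2 f" "?S D1 h" "?S D2 h"] e by linarith
  qed
qed

lemma integrably_approximable_join:
  fixes f :: "real \<Rightarrow> 'a::banach"
  assumes "u \<le> m" "m \<le> v"
    and "integrably_approximable f w {u..m}" "integrably_approximable f w {m..v}"
  shows "integrably_approximable f w {u..v}"
proof -
  obtain h1 h2 where h1: "h1 integrable_on {u..m}" "\<forall>s\<in>{u..m}. norm (f s - h1 s) \<le> w s"
    and h2: "h2 integrable_on {m..v}" "\<forall>s\<in>{m..v}. norm (f s - h2 s) \<le> w s"
    using assms(3,4) unfolding integrably_approximable_def by blast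
  let ?h = "\<lambda>s. if s \<le> m then h1 s else h2 s"
  have "?h integrable_on {u..m}" using h1(1) by (rule integrable_eq) simp
  moreover have "?h integrable_on {m..v}"
    by (rule integrable_spike_finite[of "{m}", OF _ _ h2(1)]) auto
  ultimately have "?h integrable_on {u..v}"
    by (rule Henstock_Kurzweil_Integration.integrable_combine[OF assms(1,2)])
  then show ?thesis unfolding integrably_approximable_def using h1(2) h2(2) by (auto intro!: exI[of _ ?h])
qed

lemma scaleR_integrably_approximable_const:
  fixes g :: "real \<Rightarrow> 'a::banach" and c :: "real \<Rightarrow> real"
  assumes "c integrable_on {u..v}" and "\<And>s. s \<in> {u..v} \<Longrightarrow> norm (g s - g u) \<le> e"
  shows "integrably_approximable (\<lambda>s. c s *\<^sub>R g s) (\<lambda>s. e * \<bar>c s\<bar>) {u..v}"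
proof -
  have "norm (c s *\<^sub>R g s - c s *\<^sub>R g u) \<le> e * \<bar>c s\<bar>" if "s \<in> {u..v}" for s
    using mult_left_mono[OF assms(2)[OF that], of "\<bar>c s\<bar>"]
    by (simp add: scaleR_diff_right[symmetric] mult.commute)
  then show ?thesis
    unfolding integrably_approximable_def using integrable_on_scaleR_left[OF assms(1)] by blast
qed

text \<open>Replacing \<open>g\<close> by a step function: on pieces shorter than the modulus of
  uniform continuity, \<open>c g\<close> is within \<open>\<epsilon> \<bar>c\<bar>\<close> of \<open>c\<close> times a constant.\<close>

lemma scaleR_continuous_weighted_approximation:
  fixes g :: "real \<Rightarrow> 'a::banach" and c :: "real \<Rightarrow> real"
  assumes c: "c integrable_on {a..b}" and g: "continuous_on {a..b} g" and e: "e > 0"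
  shows "integrably_approximable (\<lambda>s. c s *\<^sub>R g s) (\<lambda>s. e * \<bar>c s\<bar>) {a..b}"
proof -
  let ?P = "\<lambda>u v. integrably_approximable (\<lambda>s. c s *\<^sub>R g s) (\<lambda>s. e * \<bar>c s\<bar>) {u..v}"
  obtain \<delta> where \<delta>: "\<delta> > 0"
    "\<And>x x'. x \<in> {a..b} \<Longrightarrow> x' \<in> {a..b} \<Longrightarrow> dist x' x < \<delta> \<Longrightarrow> dist (g x') (g x) < e"
    using compact_uniformly_continuous[OF g compact_Icc] e unfolding uniformly_continuous_on_def
    by blast
  have short: "?P u v" if uv: "a \<le> u" "u \<le> v" "v \<le> b" "v - u < \<delta>" for u v
  proof (rule scaleR_integrably_approximable_const)
    show "c integrable_on {u..v}" by (rule integrable_on_subinterval[OF c]) (use uv in auto)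
    show "norm (g s - g u) \<le> e" if "s \<in> {u..v}" for s
      using \<delta>(2)[of u s] that uv by (auto simp: dist_norm dist_real_def)
  qed
  have "?P u v" if "a \<le> u" "u \<le> v" "v \<le> b" "v - u \<le> real n * (\<delta> / 2)" for n u v
    using that
  proof (induction n arbitrary: v)
    case 0
    then show ?case using \<delta>(1) by (intro short) auto
  next
    case (Suc n)
    show ?case
    proof (cases "v - u < \<delta>")
      case False
      have "?P u (v - \<delta> / 2)"
        using Suc.prems False \<delta>(1) by (intro Suc.IH) (auto simp: algebra_simps)
      moreover have "?P (v - \<delta> / 2) v" using Suc.prems False \<delta>(1) by (intro short) auto
      ultimately show ?thesis
        using False \<delta>(1) by (intro integrably_approximable_join[of u "v - \<delta> / 2" v]) auto
    qed (use Suc.prems short in auto)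
  qed
  moreover obtain n :: nat where "(b - a) / (\<delta> / 2) \<le> real n" using real_arch_simple by blast
  ultimately have "a \<le> b \<Longrightarrow> ?P a b" using \<delta>(1) by (simp add: divide_le_eq)
  then show ?thesis unfolding integrably_approximable_def by (cases "a \<le> b") auto
qed

lemma integrable_scaleR_continuous:
  fixes g :: "real \<Rightarrow> 'a::banach" and c :: "real \<Rightarrow> real"
  assumes "c integrable_on {a..b}" "(\<lambda>s. \<bar>c s\<bar>) integrable_on {a..b}" "continuous_on {a..b} g"
  shows "(\<lambda>s. c s *\<^sub>R g s) integrable_on {a..b}"
  by (rule integrable_weighted_limit[OF assms(2)])
    (auto intro: scaleR_continuous_weighted_approximation[OF assms(1,3)])

section \<open>The extrapolated semigroup\<close>

lemma continuous_on_dense_extension: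
  fixes S :: "real \<Rightarrow> 'a::real_normed_vector \<Rightarrow> 'b::real_normed_vector"
  assumes lin: "\<And>\<tau>. \<tau> \<in> A \<Longrightarrow> linear (S \<tau>)"
    and bound: "\<And>\<tau> y. \<tau> \<in> A \<Longrightarrow> norm (S \<tau> y) \<le> M * norm y"
    and dense: "closure D = UNIV" and cont: "\<And>x. x \<in> D \<Longrightarrow> continuous_on A (\<lambda>\<tau>. S \<tau> x)"
  shows "continuous_on A (\<lambda>\<tau>. S \<tau> y)"
proof -
  obtain x where x: "\<And>n. x n \<in> D" "x \<longlonglongrightarrow> y"
    using closure_sequential[of y D] dense by auto
  have "uniform_limit A (\<lambda>n \<tau>. S \<tau> (x n)) (\<lambda>\<tau>. S \<tau> y) sequentially"
  proof (rule uniform_limitI)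
    fix e :: real assume "e > 0"
    then have "\<forall>\<^sub>F n in sequentially. dist (x n) y < e / (\<bar>M\<bar> + 1)"
      using x(2) by (simp add: tendsto_iff)
    then show "\<forall>\<^sub>F n in sequentially. \<forall>\<tau>\<in>A. dist (S \<tau> (x n)) (S \<tau> y) < e"
    proof (rule eventually_mono, intro ballI)
      fix n \<tau> assume "dist (x n) y < e / (\<bar>M\<bar> + 1)" "\<tau> \<in> A"
      then have "(\<bar>M\<bar> + 1) * dist (x n) y < e"
        by (simp add: pos_less_divide_eq mult.commute add_pos_nonneg)
      moreover have "dist (S \<tau> (x n)) (S \<tau> y) \<le> M * dist (x n) y"
        using bound[OF \<open>\<tau> \<in> A\<close>, of "x n - y"] lin[OF \<open>\<tau> \<in> A\<close>] by (simp add: dist_norm linear_diff)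
      moreover have "M * dist (x n) y \<le> (\<bar>M\<bar> + 1) * dist (x n) y"
        by (intro mult_right_mono) auto
      ultimately show "dist (S \<tau> (x n)) (S \<tau> y) < e" by linarith
    qed
  qed
  then show ?thesis using x(1) cont by (intro uniform_limit_theorem) auto
qed

locale extrapolated_semigroup =
  fixes Ix :: "'x::banach \<Rightarrow> 'x" and T :: "real \<Rightarrow> 'x \<Rightarrow> 'x" and \<beta> :: complex
    and Iy :: "'y::banach \<Rightarrow> 'y" and J :: "'x \<Rightarrow> 'y" and Tm1 :: "real \<Rightarrow> 'y \<Rightarrow> 'y"
  assumes cplx: "cplx_struct Ix" and C0: "C0_semigroup Ix T" and res: "in_resolvent_set Ix T \<beta>"
    and ext: "extrapolation Ix T \<beta> Iy J Tm1"
begin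

definition R where "R = resolv Ix T \<beta>"

lemma T_bounded_linear: "t \<ge> 0 \<Longrightarrow> bounded_linear (T t)"
  and T_Ix: "t \<ge> 0 \<Longrightarrow> T t (Ix x) = Ix (T t x)"
  and T_add: "s \<ge> 0 \<Longrightarrow> t \<ge> 0 \<Longrightarrow> T (s + t) x = T s (T t x)"
  and T_0: "T 0 x = x"
  and T_tendsto: "((\<lambda>h. T h x) \<longlongrightarrow> x) (at_right 0)"
  using C0 by (simp_all add: C0_semigroup_def bounded_clin_def)

lemma T_linear: "t \<ge> 0 \<Longrightarrow> linear (T t)"
  using T_bounded_linear bounded_linear.linear by blast

lemma J_linear: "linear J"
  and J_norm: "norm (J x) = norm (R x)"
  and J_dense: "closure (range J) = UNIV"
  and Tm1_bounded_linear: "t \<ge> 0 \<Longrightarrow> bounded_linear (Tm1 t)"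
  and Tm1_J: "t \<ge> 0 \<Longrightarrow> Tm1 t (J x) = J (T t x)"
  using ext by (simp_all add: extrapolation_def R_def)

lemma Tm1_linear: "t \<ge> 0 \<Longrightarrow> linear (Tm1 t)"
  using Tm1_bounded_linear bounded_linear.linear by blast

lemma R_bounded_linear: "bounded_linear R"
  using res by (simp add: in_resolvent_set_def R_def)

lemma R_solves: "R x \<in> gen_dom T" "cscale Ix \<beta> (R x) - gen T (R x) = x"
  using theI'[of "\<lambda>y. y \<in> gen_dom T \<and> cscale Ix \<beta> y - gen T y = x"] res
  by (simp_all add: in_resolvent_set_def R_def resolv_def)

lemma R_unique: "y \<in> gen_dom T \<Longrightarrow> cscale Ix \<beta> y - gen T y = x \<Longrightarrow> y = R x"
  using res R_solves unfolding in_resolvent_set_def by metis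

lemma J_bounded_linear: "bounded_linear J"
proof -
  obtain K where "\<And>x. norm (R x) \<le> norm x * K"
    using R_bounded_linear bounded_linear.bounded by blast
  then show ?thesis
    using J_linear J_norm by (intro bounded_linear_intro[of _ K]) (auto simp: linear_add linear_scale)
qed

lemma gen_0: "gen T 0 = 0"
proof -
  have "\<forall>\<^sub>F h in at_right 0. (1 / h) *\<^sub>R (T h 0 - 0) = 0"
    using T_linear by (auto intro: eventually_mono[OF eventually_at_right_less] simp: linear_0)
  then show ?thesis
    unfolding gen_def by (intro tendsto_Lim trivial_limit_at_right_real tendsto_eventually)
qed

lemma J_inj: "inj J"
proof (rule injI)
  fix x y assume "J x = J y"
  then have "R (x - y) = 0" using J_norm[of "x - y"] J_linear by (simp add: linear_diff)
  then show "x = y"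
    using R_solves(2)[of "x - y"] linear_0[of Ix] cplx by (simp add: cscale_def gen_0 cplx_struct_def)
qed

text \<open>Differentiating \<open>h \<mapsto> T h (T t y) = T t (T h y)\<close> at \<open>0\<close> shows that \<open>T t\<close>
  maps the domain of the generator into itself and commutes with the generator.\<close>

lemma R_T_commute:
  assumes t: "t \<ge> 0"
  shows "R (T t x) = T t (R x)"
proof -
  obtain z where z: "((\<lambda>h. (1 / h) *\<^sub>R (T h (R x) - R x)) \<longlongrightarrow> z) (at_right 0)"
    using R_solves(1) by (auto simp: gen_dom_def)
  have ev: "\<forall>\<^sub>F h in at_right 0.
      T t ((1 / h) *\<^sub>R (T h (R x) - R x)) = (1 / h) *\<^sub>R (T h (T t (R x)) - T t (R x))"
  proof (rule eventually_mono[OF eventually_at_right_less], goal_cases)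
    case (1 h)
    have "T h (T t (R x)) = T (t + h) (R x)" using T_add[of h t] 1 t by (simp add: add.commute)
    also have "\<dots> = T t (T h (R x))" using T_add[of t h] 1 t by simp
    finally show ?case using T_linear[OF t] by (simp add: linear_scale linear_diff)
  qed
  have z': "((\<lambda>h. (1 / h) *\<^sub>R (T h (T t (R x)) - T t (R x))) \<longlongrightarrow> T t z) (at_right 0)"
    using Lim_transform_eventually[OF bounded_linear.tendsto[OF T_bounded_linear[OF t] z] ev] .
  have dom: "T t (R x) \<in> gen_dom T" using z' by (auto simp: gen_dom_def)
  have "gen T (T t (R x)) = T t z" "gen T (R x) = z"
    unfolding gen_def by (rule tendsto_Lim[OF trivial_limit_at_right_real z'],
        rule tendsto_Lim[OF trivial_limit_at_right_real z])
  moreover have "cscale Ix \<beta> (T t y) = T t (cscale Ix \<beta> y)" for y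
    using T_linear[OF t] T_Ix[OF t] by (simp add: cscale_def linear_add linear_scale)
  ultimately have "cscale Ix \<beta> (T t (R x)) - gen T (T t (R x)) = T t (cscale Ix \<beta> (R x) - gen T (R x))"
    using T_linear[OF t] by (simp add: linear_diff)
  also have "\<dots> = T t x" by (simp only: R_solves(2))
  finally show ?thesis using R_unique[OF dom] by metis
qed

end

locale bounded_extrapolated_semigroup = extrapolated_semigroup +
  fixes M :: real
  assumes M_nonneg: "M \<ge> 0" and T_bound: "\<And>t x. t \<ge> 0 \<Longrightarrow> norm (T t x) \<le> M * norm x"
begin

lemma norm_T_diff_le:
  assumes "\<tau> \<ge> 0" "\<tau>' \<ge> 0"
  shows "norm (T \<tau>' x - T \<tau> x) \<le> M * norm (T \<bar>\<tau>' - \<tau>\<bar> x - x)"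
proof -
  have *: "norm (T b x - T a x) \<le> M * norm (T (b - a) x - x)" if "0 \<le> a" "a \<le> b" for a b
  proof -
    have "T b x - T a x = T a (T (b - a) x - x)"
      using T_add[of a "b - a" x] T_linear[of a] that by (simp add: linear_diff)
    then show ?thesis using T_bound[OF that(1)] by simp
  qed
  show ?thesis
    using *[of \<tau> \<tau>'] *[of \<tau>' \<tau>] assms by (cases "\<tau> \<le> \<tau>'") (simp_all add: norm_minus_commute)
qed

lemma continuous_on_T: "continuous_on {0..} (\<lambda>\<tau>. T \<tau> x)"
  unfolding continuous_on_iff
proof (intro ballI allI impI)
  fix \<tau> e :: real assume \<tau>: "\<tau> \<in> {0..}" and e: "e > 0"
  then obtain d where d: "d > 0" "\<And>h. 0 < h \<Longrightarrow> h < d \<Longrightarrow> dist (T h x) x < e / (M + 1)"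
    using tendstoD[OF T_tendsto[of x], of "e / (M + 1)"] M_nonneg by (auto simp: eventually_at_right_field)
  have "dist (T \<tau>' x) (T \<tau> x) < e" if "\<tau>' \<ge> 0" "dist \<tau>' \<tau> < d" for \<tau>'
  proof -
    have "dist (T \<tau>' x) (T \<tau> x) \<le> M * norm (T \<bar>\<tau>' - \<tau>\<bar> x - x)"
      using norm_T_diff_le[of \<tau> \<tau>' x] that \<tau> by (simp add: dist_norm)
    also have "\<dots> \<le> M * (e / (M + 1))"
    proof (rule mult_left_mono[OF _ M_nonneg])
      show "norm (T \<bar>\<tau>' - \<tau>\<bar> x - x) \<le> e / (M + 1)"
        using d(2)[of "\<bar>\<tau>' - \<tau>\<bar>"] that e M_nonneg
        by (cases "\<tau>' = \<tau>") (auto simp: dist_norm dist_real_def T_0)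
    qed
    also have "\<dots> < e" using M_nonneg e by (simp add: field_simps)
    finally show ?thesis .
  qed
  with d(1) show "\<exists>d>0. \<forall>\<tau>'\<in>{0..}. dist \<tau>' \<tau> < d \<longrightarrow> dist (T \<tau>' x) (T \<tau> x) < e" by auto
qed

lemma norm_Tm1_le:
  assumes t: "t \<ge> 0"
  shows "norm (Tm1 t y) \<le> M * norm y"
proof -
  have "closed {y. norm (Tm1 t y) \<le> M * norm y}"
    by (intro closed_Collect_le continuous_intros linear_continuous_on Tm1_bounded_linear[OF t])
  moreover have "range J \<subseteq> {y. norm (Tm1 t y) \<le> M * norm y}"
    using T_bound[OF t] by (auto simp: Tm1_J[OF t] J_norm R_T_commute[OF t])
  ultimately show ?thesis using closure_minimal[of "range J"] J_dense by auto
qed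

lemma continuous_on_Tm1: "continuous_on {0..} (\<lambda>\<tau>. Tm1 \<tau> y)"
proof (rule continuous_on_dense_extension[OF Tm1_linear norm_Tm1_le J_dense])
  fix x assume "x \<in> range J"
  then obtain x' where "x = J x'" by blast
  have "continuous_on {0..} (\<lambda>\<tau>. J (T \<tau> x'))"
    by (rule continuous_on_compose2[OF linear_continuous_on[OF J_bounded_linear] continuous_on_T]) auto
  then show "continuous_on {0..} (\<lambda>\<tau>. Tm1 \<tau> x)"
    unfolding \<open>x = J x'\<close> by (rule continuous_on_eq) (simp add: Tm1_J)
qed auto

lemma integrable_scaleR_Tm1:
  fixes c :: "real \<Rightarrow> real"
  assumes "t \<ge> 0" "L1_mem t c"
  shows "(\<lambda>s. c s *\<^sub>R Tm1 (t - s) y) integrable_on {0..t}"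
proof (rule integrable_scaleR_continuous[OF L1_mem_imp_integrable_on[OF assms(2)]])
  show "continuous_on {0..t} (\<lambda>s. Tm1 (t - s) y)"
    by (rule continuous_on_compose2[OF continuous_on_Tm1, of _ "\<lambda>s. t - s"])
      (auto intro: continuous_intros)
qed

end

section \<open>Input-to-state stability\<close>

definition norm_preimage_le :: "('x::real_normed_vector \<Rightarrow> 'y) \<Rightarrow> 'y \<Rightarrow> real \<Rightarrow> bool" where
  "norm_preimage_le J y r \<longleftrightarrow> (\<exists>\<xi>. J \<xi> = y \<and> norm \<xi> \<le> r)"

lemma norm_preimage_le_mono:
  "norm_preimage_le J y r \<Longrightarrow> r \<le> r' \<Longrightarrow> norm_preimage_le J y r'"
  unfolding norm_preimage_le_def by force

lemma norm_preimage_le_add: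
  assumes "linear J" "norm_preimage_le J y r" "norm_preimage_le J y' r'"
  shows "norm_preimage_le J (y + y') (r + r')"
proof -
  obtain \<xi> \<xi>' where "J \<xi> = y" "norm \<xi> \<le> r" "J \<xi>' = y'" "norm \<xi>' \<le> r'"
    using assms(2,3) by (auto simp: norm_preimage_le_def)
  then show ?thesis unfolding norm_preimage_le_def using assms(1)
    by (intro exI[of _ "\<xi> + \<xi>'"]) (auto simp: linear_add intro: norm_triangle_le)
qed

lemma norm_preimage_le_sum:
  assumes "linear J" "\<And>b. b \<in> E \<Longrightarrow> norm_preimage_le J (y b) (r b)"
  shows "norm_preimage_le J (\<Sum>b\<in>E. y b) (\<Sum>b\<in>E. r b)"
  using assms(2)
proof (induction E rule: infinite_finite_induct)
  case (insert b E)
  then show ?case using norm_preimage_le_add[OF assms(1)] by simp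
qed (auto simp: norm_preimage_le_def linear_0[OF assms(1)] intro: exI[of _ 0])

lemma Z_ISS_iff:
  "Z_ISS Z Tm1 J B \<longleftrightarrow> (\<exists>\<beta> \<mu>. classKL \<beta> \<and> classKinf \<mu> \<and>
     (\<forall>t\<ge>0. \<forall>x0 u. Z_mem Z t u \<longrightarrow>
        norm_preimage_le J (mild Tm1 J B x0 u t) (\<beta> (norm x0) t + \<mu> (Z_norm Z t u))))"
  by (simp add: Z_ISS_def norm_preimage_le_def)

lemma integral_ISS_iff:
  "integral_ISS Tm1 J B \<longleftrightarrow> (\<exists>\<beta> \<theta> \<mu>. classKL \<beta> \<and> classKinf \<theta> \<and> classK \<mu> \<and>
     (\<forall>t\<ge>0. \<forall>x0 u. Linf_mem t u \<longrightarrow>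
        norm_preimage_le J (mild Tm1 J B x0 u t)
          (\<beta> (norm x0) t + \<theta> (integral {0..t} (\<lambda>s. \<mu> (norm (u s)))))))"
  by (simp add: integral_ISS_def norm_preimage_le_def)

lemma Z_ISS_zero_initial_state:
  fixes B :: "'i \<Rightarrow> 'u::real_normed_vector \<Rightarrow> 'y::real_normed_vector"
  assumes "\<And>b. b \<in> E \<Longrightarrow> Z_ISS Z Tm1 J (B b)"
  shows "\<exists>\<mu>. (\<forall>b\<in>E. classKinf (\<mu> b)) \<and> (\<forall>b\<in>E. \<forall>t u. t \<ge> 0 \<longrightarrow> Z_mem Z t u \<longrightarrow>
      norm_preimage_le J (mild Tm1 J (B b) 0 u t) (\<mu> b (Z_norm Z t u)))"
proof -
  have "\<exists>\<mu>. classKinf \<mu> \<and> (\<forall>t u. t \<ge> 0 \<longrightarrow> Z_mem Z t u \<longrightarrow>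
      norm_preimage_le J (mild Tm1 J (B b) 0 u t) (\<mu> (Z_norm Z t u)))" if b: "b \<in> E" for b
  proof -
    obtain \<beta> \<mu> where "classKL \<beta>" "classKinf \<mu>" and est: "\<And>t x0 u. t \<ge> 0 \<Longrightarrow> Z_mem Z t u \<Longrightarrow>
        norm_preimage_le J (mild Tm1 J (B b) x0 u t) (\<beta> (norm x0) t + \<mu> (Z_norm Z t u))"
      using assms[OF b] unfolding Z_ISS_iff by blast
    have "norm_preimage_le J (mild Tm1 J (B b) 0 u t) (\<mu> (Z_norm Z t u))" if "t \<ge> 0" "Z_mem Z t u" for t u
      using est[OF that, of 0] classKL_zero[OF \<open>classKL \<beta>\<close> that(1)] by simp
    with \<open>classKinf \<mu>\<close> show ?thesis by (intro exI[of _ \<mu>]) simp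
  qed
  from bchoice[OF ballI[OF this]] obtain \<mu> where "\<forall>b\<in>E. classKinf (\<mu> b) \<and>
      (\<forall>t u. t \<ge> 0 \<longrightarrow> Z_mem Z t u \<longrightarrow> norm_preimage_le J (mild Tm1 J (B b) 0 u t) (\<mu> b (Z_norm Z t u)))" ..
  then show ?thesis by (intro exI[of _ \<mu>]) simp
qed

lemma integral_ISS_zero_initial_state:
  fixes B :: "'i \<Rightarrow> 'u::real_normed_vector \<Rightarrow> 'y::real_normed_vector"
  assumes "\<And>b. b \<in> E \<Longrightarrow> integral_ISS Tm1 J (B b)"
  shows "\<exists>\<theta> \<mu>. (\<forall>b\<in>E. classKinf (\<theta> b) \<and> classK (\<mu> b)) \<and> (\<forall>b\<in>E. \<forall>t u. t \<ge> 0 \<longrightarrow> Linf_mem t u \<longrightarrow>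
      norm_preimage_le J (mild Tm1 J (B b) 0 u t) (\<theta> b (integral {0..t} (\<lambda>s. \<mu> b (norm (u s))))))"
proof -
  have "\<exists>\<theta>. \<exists>\<mu>. classKinf \<theta> \<and> classK \<mu> \<and> (\<forall>t u. t \<ge> 0 \<longrightarrow> Linf_mem t u \<longrightarrow>
      norm_preimage_le J (mild Tm1 J (B b) 0 u t) (\<theta> (integral {0..t} (\<lambda>s. \<mu> (norm (u s))))))"
    if b: "b \<in> E" for b
  proof -
    obtain \<beta> \<theta> \<mu> where "classKL \<beta>" "classKinf \<theta>" "classK \<mu>"
      and est: "\<And>t x0 u. t \<ge> 0 \<Longrightarrow> Linf_mem t u \<Longrightarrow> norm_preimage_le J (mild Tm1 J (B b) x0 u t)
        (\<beta> (norm x0) t + \<theta> (integral {0..t} (\<lambda>s. \<mu> (norm (u s)))))"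
      using assms[OF b] unfolding integral_ISS_iff by blast
    have "norm_preimage_le J (mild Tm1 J (B b) 0 u t) (\<theta> (integral {0..t} (\<lambda>s. \<mu> (norm (u s)))))"
      if "t \<ge> 0" "Linf_mem t u" for t u
      using est[OF that, of 0] classKL_zero[OF \<open>classKL \<beta>\<close> that(1)] by simp
    with \<open>classKinf \<theta>\<close> \<open>classK \<mu>\<close> show ?thesis by (intro exI[of _ \<theta>] exI[of _ \<mu>]) simp
  qed
  from bchoice[OF ballI[OF this]] obtain \<theta> where "\<forall>b\<in>E. \<exists>\<mu>. classKinf (\<theta> b) \<and> classK \<mu> \<and>
      (\<forall>t u. t \<ge> 0 \<longrightarrow> Linf_mem t u \<longrightarrow>
        norm_preimage_le J (mild Tm1 J (B b) 0 u t) (\<theta> b (integral {0..t} (\<lambda>s. \<mu> (norm (u s))))))" ..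
  from bchoice[OF this] obtain \<mu> where "\<forall>b\<in>E. classKinf (\<theta> b) \<and> classK (\<mu> b) \<and>
      (\<forall>t u. t \<ge> 0 \<longrightarrow> Linf_mem t u \<longrightarrow>
        norm_preimage_le J (mild Tm1 J (B b) 0 u t) (\<theta> b (integral {0..t} (\<lambda>s. \<mu> b (norm (u s))))))" ..
  then show ?thesis by (intro exI[of _ \<theta>] exI[of _ \<mu>]) simp
qed

lemma integrable_classK_norm:
  assumes "Linf_mem t u" "classK \<mu>"
  shows "(\<lambda>s. \<mu> (norm (u s))) integrable_on {0..t}"
  using L1_mem_imp_integrable_on(1)[OF Linf_mem_classK_L1_mem[OF assms]] .

lemma integral_classK_norm_nonneg:
  assumes "Linf_mem t u" "classK \<mu>"
  shows "0 \<le> integral {0..t} (\<lambda>s. \<mu> (norm (u s)))"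
  using integrable_classK_norm[OF assms] classK_nonneg[OF assms(2)]
  by (intro Henstock_Kurzweil_Integration.integral_nonneg) auto

lemma integral_classK_norm_mono:
  assumes "Linf_mem t u" "classK \<mu>" "Linf_mem t v" "classK \<nu>"
    and "\<And>s. \<mu> (norm (u s)) \<le> \<nu> (norm (v s))"
  shows "integral {0..t} (\<lambda>s. \<mu> (norm (u s))) \<le> integral {0..t} (\<lambda>s. \<nu> (norm (v s)))"
  using assms by (intro integral_le integrable_classK_norm)

lemma Linf_mem_classK_bounded_linear:
  fixes L :: "'a::real_normed_vector \<Rightarrow> 'b::real_normed_vector"
  assumes u: "Linf_mem t u" and L: "bounded_linear L" and C: "C > 0" "\<And>x. norm (L x) \<le> C * norm x"
    and \<mu>: "classK \<mu>" and \<nu>: "classK \<nu>" and dom: "\<And>r. r \<ge> 0 \<Longrightarrow> \<mu> (C * r) \<le> \<nu> r"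
  shows "Linf_mem t (\<lambda>s. L (u s))"
    and "integral {0..t} (\<lambda>s. \<mu> (norm (L (u s)))) \<le> integral {0..t} (\<lambda>s. \<nu> (norm (u s)))"
proof -
  show Lu: "Linf_mem t (\<lambda>s. L (u s))"
    using Linf_mem_dominated[OF C(1) C(2) meas_on_bounded_linear[OF L] u] u by (simp add: Linf_mem_def)
  have "\<mu> (norm (L (u s))) \<le> \<nu> (norm (u s))" for s
    using classK_mono[OF \<mu> _ C(2)] dom[of "norm (u s)"] by (meson norm_ge_zero order_trans)
  then show "integral {0..t} (\<lambda>s. \<mu> (norm (L (u s)))) \<le> integral {0..t} (\<lambda>s. \<nu> (norm (u s)))"
    by (rule integral_classK_norm_mono[OF Lu \<mu> u \<nu>])
qed

lemma Z_ISS_compose: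
  assumes Z: "admissible_Zspace Z" and ISS: "Z_ISS Z Tm1 J B" and L: "bounded_linear L"
  shows "Z_ISS Z Tm1 J (\<lambda>z. B (L z))"
proof -
  obtain \<beta> \<mu> where \<beta>: "classKL \<beta>" and \<mu>: "classKinf \<mu>" and est: "\<And>t x0 u. t \<ge> 0 \<Longrightarrow> Z_mem Z t u \<Longrightarrow>
      norm_preimage_le J (mild Tm1 J B x0 u t) (\<beta> (norm x0) t + \<mu> (Z_norm Z t u))"
    using ISS unfolding Z_ISS_iff by blast
  obtain C where C: "C > 0" "\<And>z. norm (L z) \<le> C * norm z"
    using bounded_linear.pos_bounded[OF L] by (metis mult.commute)
  have "norm_preimage_le J (mild Tm1 J (\<lambda>z. B (L z)) x0 u t) (\<beta> (norm x0) t + \<mu> (C * Z_norm Z t u))"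
    if "t \<ge> 0" "Z_mem Z t u" for t x0 u
  proof -
    have Lu: "Z_mem Z t (\<lambda>s. L (u s))" "Z_norm Z t (\<lambda>s. L (u s)) \<le> C * Z_norm Z t u"
      using Z_mem_bounded_linear[OF Z L C that(2)] by auto
    have "\<mu> (Z_norm Z t (\<lambda>s. L (u s))) \<le> \<mu> (C * Z_norm Z t u)"
      using \<mu> Z_norm_nonneg[OF Z Lu(1)] Lu(2) by (simp add: classKinf_def classK_mono)
    moreover have "mild Tm1 J (\<lambda>z. B (L z)) x0 u t = mild Tm1 J B x0 (\<lambda>s. L (u s)) t"
      by (simp add: mild_def)
    ultimately show ?thesis
      using norm_preimage_le_mono[OF est[OF that(1) Lu(1), of x0]] by simp
  qed
  then show ?thesis unfolding Z_ISS_iff using \<beta> classKinf_scale[OF \<mu> C(1)]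
    by (intro exI[of _ \<beta>] exI[of _ "\<lambda>r. \<mu> (C * r)"]) auto
qed

lemma integral_ISS_compose:
  assumes ISS: "integral_ISS Tm1 J B" and L: "bounded_linear L"
  shows "integral_ISS Tm1 J (\<lambda>z. B (L z))"
proof -
  obtain \<beta> \<theta> \<mu> where \<beta>: "classKL \<beta>" and \<theta>: "classKinf \<theta>" and \<mu>: "classK \<mu>"
    and est: "\<And>t x0 u. t \<ge> 0 \<Longrightarrow> Linf_mem t u \<Longrightarrow> norm_preimage_le J (mild Tm1 J B x0 u t)
      (\<beta> (norm x0) t + \<theta> (integral {0..t} (\<lambda>s. \<mu> (norm (u s)))))"
    using ISS unfolding integral_ISS_iff by blast
  obtain C where C: "C > 0" "\<And>z. norm (L z) \<le> C * norm z"
    using bounded_linear.pos_bounded[OF L] by (metis mult.commute)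
  have \<mu>C: "classK (\<lambda>r. \<mu> (C * r))" by (rule classK_scale[OF \<mu> C(1)])
  have "norm_preimage_le J (mild Tm1 J (\<lambda>z. B (L z)) x0 u t)
      (\<beta> (norm x0) t + \<theta> (integral {0..t} (\<lambda>s. \<mu> (C * norm (u s)))))"
    if t: "t \<ge> 0" and u: "Linf_mem t u" for t x0 u
  proof -
    note Lu = Linf_mem_classK_bounded_linear[OF u L C \<mu> \<mu>C order_refl]
    then have "\<theta> (integral {0..t} (\<lambda>s. \<mu> (norm (L (u s))))) \<le> \<theta> (integral {0..t} (\<lambda>s. \<mu> (C * norm (u s))))"
      using \<theta> integral_classK_norm_nonneg[OF Lu(1) \<mu>] by (simp add: classKinf_def classK_mono)
    moreover have "mild Tm1 J (\<lambda>z. B (L z)) x0 u t = mild Tm1 J B x0 (\<lambda>s. L (u s)) t"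
      by (simp add: mild_def)
    ultimately show ?thesis
      using norm_preimage_le_mono[OF est[OF t Lu(1), of x0]] by simp
  qed
  then show ?thesis unfolding integral_ISS_iff using \<beta> \<theta> \<mu>C
    by (intro exI[of _ \<beta>] exI[of _ \<theta>] exI[of _ "\<lambda>r. \<mu> (C * r)"]) auto
qed

context extrapolated_semigroup
begin

lemma mild_zero_input:
  assumes "B 0 = 0" "t \<ge> 0"
  shows "mild Tm1 J B x0 (\<lambda>s. 0) t = J (T t x0)"
proof -
  have "integral {0..t} (\<lambda>s. Tm1 (t - s) (B 0)) = integral {0..t} (\<lambda>s. 0)"
    by (rule integral_cong) (use assms Tm1_linear in \<open>auto simp: linear_0\<close>)
  then show ?thesis by (simp add: mild_def Tm1_J[OF assms(2)])
qed

lemma Z_ISS_imp_classKL_bound: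
  fixes B :: "'u::real_normed_vector \<Rightarrow> _"
  assumes Z: "admissible_Zspace Z" and ISS: "Z_ISS Z Tm1 J B" and "B 0 = 0"
  obtains \<gamma> where "classKL \<gamma>" "\<And>t x. t \<ge> 0 \<Longrightarrow> norm (T t x) \<le> \<gamma> (norm x) t"
proof -
  obtain \<gamma> \<mu> where "classKL \<gamma>" "classKinf \<mu>" and est: "\<And>t x0 u. t \<ge> 0 \<Longrightarrow> Z_mem Z t u \<Longrightarrow>
      norm_preimage_le J (mild Tm1 J B x0 u t) (\<gamma> (norm x0) t + \<mu> (Z_norm Z t u))"
    using ISS unfolding Z_ISS_iff by blast
  moreover have "norm (T t x) \<le> \<gamma> (norm x) t" if t: "t \<ge> 0" for t x
  proof -
    have "\<mu> 0 = 0" using \<open>classKinf \<mu>\<close> by (simp add: classKinf_def classK_def)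
    then have "norm_preimage_le J (J (T t x)) (\<gamma> (norm x) t)"
      using est[OF t Z_mem_zero(1)[OF Z], of x] Z_mem_zero(2)[OF Z, where 'a='u]
      by (simp add: mild_zero_input[of B, OF \<open>B 0 = 0\<close> t])
    then show ?thesis using J_inj by (auto simp: norm_preimage_le_def inj_eq)
  qed
  ultimately show ?thesis using that by blast
qed

lemma integral_ISS_imp_classKL_bound:
  fixes B :: "'u::real_normed_vector \<Rightarrow> _"
  assumes ISS: "integral_ISS Tm1 J B" and "B 0 = 0"
  obtains \<gamma> where "classKL \<gamma>" "\<And>t x. t \<ge> 0 \<Longrightarrow> norm (T t x) \<le> \<gamma> (norm x) t"
proof -
  obtain \<gamma> \<theta> \<mu> where "classKL \<gamma>" "classKinf \<theta>" "classK \<mu>"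
    and est: "\<And>t x0 u. t \<ge> 0 \<Longrightarrow> Linf_mem t u \<Longrightarrow> norm_preimage_le J (mild Tm1 J B x0 u t)
      (\<gamma> (norm x0) t + \<theta> (integral {0..t} (\<lambda>s. \<mu> (norm (u s)))))"
    using ISS unfolding integral_ISS_iff by blast
  moreover have "norm (T t x) \<le> \<gamma> (norm x) t" if t: "t \<ge> 0" for t x
  proof -
    have "\<theta> 0 = 0" "\<mu> 0 = 0"
      using \<open>classKinf \<theta>\<close> \<open>classK \<mu>\<close> by (simp_all add: classKinf_def classK_def)
    moreover have "Linf_mem t (\<lambda>s. 0 :: 'u)"
      using Z_mem_zero(1)[of Linfty] by (simp add: admissible_Zspace_def)
    ultimately have "norm_preimage_le J (J (T t x)) (\<gamma> (norm x) t)"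
      using est[OF t, of "\<lambda>s. 0" x] by (simp add: mild_zero_input[of B, OF \<open>B 0 = 0\<close> t])
    then show ?thesis using J_inj by (auto simp: norm_preimage_le_def inj_eq)
  qed
  ultimately show ?thesis using that by blast
qed

end

context bounded_extrapolated_semigroup
begin

text \<open>The integral may be split because every summand is integrable
  (\<open>integrable_scaleR_Tm1\<close>); this is where boundedness of the semigroup is needed.\<close>

lemma mild_eq_sum_columns:
  fixes Bb :: "'i \<Rightarrow> complex \<Rightarrow> _" and \<phi> :: "'i \<Rightarrow> 'u::real_normed_vector \<Rightarrow> real"
  assumes fin: "finite E" and \<phi>: "\<And>b. bounded_linear (\<phi> b)" and Bb: "\<And>b. linear (Bb b)"
    and rep: "\<And>x. B x = (\<Sum>b\<in>E. \<phi> b x *\<^sub>R Bb b 1)" and t: "t \<ge> 0" and u: "L1_mem t u"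
  shows "mild Tm1 J B x0 u t
    = J (T t x0) + (\<Sum>b\<in>E. mild Tm1 J (Bb b) 0 (\<lambda>s. complex_of_real (\<phi> b (u s))) t)"
proof -
  have col: "mild Tm1 J (Bb b) 0 (\<lambda>s. complex_of_real (\<phi> b (u s))) t
      = integral {0..t} (\<lambda>s. \<phi> b (u s) *\<^sub>R Tm1 (t - s) (Bb b 1))" for b
  proof -
    have "Bb b (complex_of_real r) = r *\<^sub>R Bb b 1" for r
      using linear_scale[OF Bb[of b], of r 1] by (simp add: scaleR_conv_of_real)
    then have "integral {0..t} (\<lambda>s. Tm1 (t - s) (Bb b (complex_of_real (\<phi> b (u s)))))
        = integral {0..t} (\<lambda>s. \<phi> b (u s) *\<^sub>R Tm1 (t - s) (Bb b 1))"
      using Tm1_linear by (intro integral_cong) (simp add: linear_scale)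
    moreover have "Tm1 t (J 0) = 0" using Tm1_linear[OF t] J_linear by (simp add: linear_0)
    ultimately show ?thesis by (simp add: mild_def)
  qed
  have "L1_mem t (\<lambda>s. \<phi> b (u s))" for b
  proof -
    obtain K where K: "K > 0" "\<And>x. norm (\<phi> b x) \<le> norm x * K"
      using bounded_linear.pos_bounded[OF \<phi>] by blast
    then have "norm (\<phi> b (u s)) \<le> K * norm (u s)" for s by (simp add: mult.commute)
    moreover have "meas_on t u" using u by (simp add: L1_mem_def)
    ultimately show ?thesis
      using L1_mem_dominated[OF K(1) _ meas_on_bounded_linear[OF \<phi>] u] by blast
  qed
  then have int: "(\<lambda>s. \<phi> b (u s) *\<^sub>R Tm1 (t - s) (Bb b 1)) integrable_on {0..t}" for b
    using integrable_scaleR_Tm1[OF t] by blast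
  have "integral {0..t} (\<lambda>s. Tm1 (t - s) (B (u s)))
      = integral {0..t} (\<lambda>s. \<Sum>b\<in>E. \<phi> b (u s) *\<^sub>R Tm1 (t - s) (Bb b 1))"
    using Tm1_linear by (intro integral_cong) (simp add: rep linear_sum linear_scale)
  also have "\<dots> = (\<Sum>b\<in>E. integral {0..t} (\<lambda>s. \<phi> b (u s) *\<^sub>R Tm1 (t - s) (Bb b 1)))"
    by (rule integral_sum[OF fin int])
  finally show ?thesis unfolding col by (simp add: mild_def Tm1_J[OF t])
qed

lemma norm_preimage_le_mild_columns:
  fixes Bb :: "'i \<Rightarrow> complex \<Rightarrow> _" and \<phi> :: "'i \<Rightarrow> 'u::real_normed_vector \<Rightarrow> real"
  assumes fin: "finite E" and \<phi>: "\<And>b. bounded_linear (\<phi> b)" and Bb: "\<And>b. linear (Bb b)"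
    and rep: "\<And>x. B x = (\<Sum>b\<in>E. \<phi> b x *\<^sub>R Bb b 1)" and t: "t \<ge> 0" and u: "L1_mem t u"
    and free: "norm (T t x0) \<le> a"
    and cols: "\<And>b. b \<in> E \<Longrightarrow>
      norm_preimage_le J (mild Tm1 J (Bb b) 0 (\<lambda>s. complex_of_real (\<phi> b (u s))) t) (r b)"
  shows "norm_preimage_le J (mild Tm1 J B x0 u t) (a + (\<Sum>b\<in>E. r b))"
proof -
  have "norm_preimage_le J (J (T t x0)) a" using free by (auto simp: norm_preimage_le_def)
  then show ?thesis unfolding mild_eq_sum_columns[OF fin \<phi> Bb rep t u]
    by (rule norm_preimage_le_add[OF J_linear _ norm_preimage_le_sum[OF J_linear cols]])
qed

end

context extrapolated_semigroup
begin

lemma Z_ISS_of_columns: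
  fixes Bb :: "'i \<Rightarrow> complex \<Rightarrow> _" and \<phi> :: "'i \<Rightarrow> 'u::real_normed_vector \<Rightarrow> real"
  assumes Z: "admissible_Zspace Z" and fin: "finite E"
    and \<gamma>: "classKL \<gamma>" and free: "\<And>t x. t \<ge> 0 \<Longrightarrow> norm (T t x) \<le> \<gamma> (norm x) t"
    and ISS: "\<And>b. b \<in> E \<Longrightarrow> Z_ISS Z Tm1 J (Bb b)"
    and \<phi>: "\<And>b. bounded_linear (\<phi> b)" and Bb: "\<And>b. linear (Bb b)"
    and rep: "\<And>x. B x = (\<Sum>b\<in>E. \<phi> b x *\<^sub>R Bb b 1)"
  shows "Z_ISS Z Tm1 J B"
proof -
  obtain M where "M \<ge> 0" "\<And>t x. t \<ge> 0 \<Longrightarrow> norm (T t x) \<le> M * norm x"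
    using classKL_bound_imp_uniform_bound[OF \<gamma> T_linear free] by blast
  then interpret bounded_extrapolated_semigroup Ix T \<beta> Iy J Tm1 M by unfold_locales
  obtain \<mu> where \<mu>: "\<forall>b\<in>E. classKinf (\<mu> b)" and est: "\<forall>b\<in>E. \<forall>t u. t \<ge> 0 \<longrightarrow>
      Z_mem Z t u \<longrightarrow> norm_preimage_le J (mild Tm1 J (Bb b) 0 u t) (\<mu> b (Z_norm Z t u))"
    using Z_ISS_zero_initial_state[of E Z Tm1 J Bb, OF ISS] by blast
  have \<mu>K: "\<And>b. b \<in> E \<Longrightarrow> classK (\<mu> b)" using \<mu> by (simp add: classKinf_def)
  obtain K where K: "\<And>b. K b > 0" "\<And>b x. norm (\<phi> b x) \<le> K b * norm x"
    using bounded_linear_family_pos_bounded[of \<phi>, OF \<phi>] by blast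
  define \<nu> where "\<nu> r = r + (\<Sum>b\<in>E. \<mu> b (K b * r))" for r
  have "norm_preimage_le J (mild Tm1 J B x0 u t) (\<gamma> (norm x0) t + \<nu> (Z_norm Z t u))"
    if t: "t \<ge> 0" and u: "Z_mem Z t u" for t x0 u
  proof -
    have "norm_preimage_le J (mild Tm1 J (Bb b) 0 (\<lambda>s. complex_of_real (\<phi> b (u s))) t)
        (\<mu> b (K b * Z_norm Z t u))" if "b \<in> E" for b
    proof -
      define c where "c = (\<lambda>s. complex_of_real (\<phi> b (u s)))"
      have "norm (complex_of_real (\<phi> b x)) \<le> K b * norm x" for x using K(2)[of b x] by simp
      then have c: "Z_mem Z t c \<and> Z_norm Z t c \<le> K b * Z_norm Z t u" unfolding c_def
        by (rule Z_mem_bounded_linear[OF Z bounded_linear_compose[OF bounded_linear_of_real \<phi>] K(1) _ u])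
      then have "\<mu> b (Z_norm Z t c) \<le> \<mu> b (K b * Z_norm Z t u)"
        using classK_mono[OF \<mu>K[OF that] Z_norm_nonneg[OF Z]] by blast
      with norm_preimage_le_mono[OF est[rule_format, OF that t conjunct1[OF c]]]
      have "norm_preimage_le J (mild Tm1 J (Bb b) 0 c t) (\<mu> b (K b * Z_norm Z t u))" .
      then show ?thesis by (simp only: c_def)
    qed
    then have "norm_preimage_le J (mild Tm1 J B x0 u t)
        (\<gamma> (norm x0) t + (\<Sum>b\<in>E. \<mu> b (K b * Z_norm Z t u)))"
      by (rule norm_preimage_le_mild_columns[OF fin \<phi> Bb rep t Z_mem_imp_L1_mem[OF Z u] free[OF t]])
    then show ?thesis
      by (rule norm_preimage_le_mono) (use Z_norm_nonneg[OF Z u] in \<open>simp add: \<nu>_def\<close>)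
  qed
  moreover have "classKinf \<nu>"
    unfolding \<nu>_def using classK_scale[OF \<mu>K K(1)] by (rule classKinf_id_plus_sum)
  ultimately show ?thesis unfolding Z_ISS_iff using \<gamma> by blast
qed

lemma integral_ISS_of_columns:
  fixes Bb :: "'i \<Rightarrow> complex \<Rightarrow> _" and \<phi> :: "'i \<Rightarrow> 'u::real_normed_vector \<Rightarrow> real"
  assumes fin: "finite E"
    and \<gamma>: "classKL \<gamma>" and free: "\<And>t x. t \<ge> 0 \<Longrightarrow> norm (T t x) \<le> \<gamma> (norm x) t"
    and ISS: "\<And>b. b \<in> E \<Longrightarrow> integral_ISS Tm1 J (Bb b)"
    and \<phi>: "\<And>b. bounded_linear (\<phi> b)" and Bb: "\<And>b. linear (Bb b)"
    and rep: "\<And>x. B x = (\<Sum>b\<in>E. \<phi> b x *\<^sub>R Bb b 1)"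
  shows "integral_ISS Tm1 J B"
proof -
  obtain M where "M \<ge> 0" "\<And>t x. t \<ge> 0 \<Longrightarrow> norm (T t x) \<le> M * norm x"
    using classKL_bound_imp_uniform_bound[OF \<gamma> T_linear free] by blast
  then interpret bounded_extrapolated_semigroup Ix T \<beta> Iy J Tm1 M by unfold_locales
  obtain \<theta> \<mu> where \<theta>\<mu>: "\<forall>b\<in>E. classKinf (\<theta> b) \<and> classK (\<mu> b)"
    and est: "\<forall>b\<in>E. \<forall>t u. t \<ge> 0 \<longrightarrow> Linf_mem t u \<longrightarrow>
      norm_preimage_le J (mild Tm1 J (Bb b) 0 u t) (\<theta> b (integral {0..t} (\<lambda>s. \<mu> b (norm (u s)))))"
    using integral_ISS_zero_initial_state[of E Tm1 J Bb, OF ISS] by blast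
  have \<theta>K: "\<And>b. b \<in> E \<Longrightarrow> classK (\<theta> b)" and \<mu>: "\<And>b. b \<in> E \<Longrightarrow> classK (\<mu> b)"
    using \<theta>\<mu> by (simp_all add: classKinf_def)
  obtain K where K: "\<And>b. K b > 0" "\<And>b x. norm (\<phi> b x) \<le> K b * norm x"
    using bounded_linear_family_pos_bounded[of \<phi>, OF \<phi>] by blast
  define \<theta>' where "\<theta>' r = r + (\<Sum>b\<in>E. \<theta> b r)" for r
  define \<mu>' where "\<mu>' r = r + (\<Sum>b\<in>E. \<mu> b (K b * r))" for r
  have "classKinf \<mu>'" unfolding \<mu>'_def using classK_scale[OF \<mu> K(1)] by (rule classKinf_id_plus_sum)
  then have \<mu>': "classK \<mu>'" by (simp add: classKinf_def)
  have "norm_preimage_le J (mild Tm1 J B x0 u t)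
      (\<gamma> (norm x0) t + \<theta>' (integral {0..t} (\<lambda>s. \<mu>' (norm (u s)))))"
    if t: "t \<ge> 0" and u: "Linf_mem t u" for t x0 u
  proof -
    define I where "I = integral {0..t} (\<lambda>s. \<mu>' (norm (u s)))"
    have "norm_preimage_le J (mild Tm1 J (Bb b) 0 (\<lambda>s. complex_of_real (\<phi> b (u s))) t) (\<theta> b I)"
      if "b \<in> E" for b
    proof -
      have LC: "norm (complex_of_real (\<phi> b x)) \<le> K b * norm x" for x using K(2)[of b x] by simp
      have dom: "\<mu> b (K b * r) \<le> \<mu>' r" if "r \<ge> 0" for r
        using classK_le_id_plus_sum[of E "\<lambda>b r. \<mu> b (K b * r)" b r] classK_scale[OF \<mu> K(1)]
          fin \<open>b \<in> E\<close> that by (simp add: \<mu>'_def)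
      note c = Linf_mem_classK_bounded_linear[OF u bounded_linear_compose[OF
          bounded_linear_of_real \<phi>] K(1) LC \<mu>[OF that] \<mu>' dom]
      show ?thesis
        using norm_preimage_le_mono[OF est[rule_format, OF that t c(1)]] classK_mono[OF \<theta>K[OF that]]
          integral_classK_norm_nonneg[OF c(1) \<mu>[OF that]] c(2) unfolding I_def by blast
    qed
    then have "norm_preimage_le J (mild Tm1 J B x0 u t) (\<gamma> (norm x0) t + (\<Sum>b\<in>E. \<theta> b I))"
      by (rule norm_preimage_le_mild_columns[OF fin \<phi> Bb rep t Linf_mem_imp_L1_mem[OF u] free[OF t]])
    then show ?thesis
      by (rule norm_preimage_le_mono) (use integral_classK_norm_nonneg[OF u \<mu>'] in \<open>simp add: \<theta>'_def I_def\<close>)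
  qed
  moreover have "classKinf \<theta>'" unfolding \<theta>'_def using \<theta>K by (rule classKinf_id_plus_sum)
  ultimately show ?thesis unfolding integral_ISS_iff using \<gamma> \<mu>' by blast
qed

end

section \<open>Rank-one control operators\<close>

lemma bounded_linear_cscale: "bounded_linear (\<lambda>z. cscale I z f)"
proof (rule bounded_linear_intro[of _ "norm f + norm (I f)"])
  fix z :: complex
  have "norm (cscale I z f) \<le> \<bar>Re z\<bar> * norm f + \<bar>Im z\<bar> * norm (I f)"
    unfolding cscale_def using norm_triangle_ineq[of "Re z *\<^sub>R f" "Im z *\<^sub>R I f"] by simp
  also have "\<dots> \<le> norm z * norm f + norm z * norm (I f)"
    by (intro add_mono mult_right_mono abs_Re_le_cmod abs_Im_le_cmod) auto
  finally show "norm (cscale I z f) \<le> norm z * (norm f + norm (I f))" by (simp add: algebra_simps)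
qed (simp_all add: cscale_def algebra_simps)

lemma linear_Bcol: "linear (Bcol Iy B f)"
  by (rule linearI) (simp_all add: Bcol_def cscale_def algebra_simps)

lemma Bcol_1: "Bcol Iy B f 1 = B f"
  by (simp add: Bcol_def cscale_def)

lemma Bcol_eq_compose:
  assumes "bounded_clin Iu Iy B"
  shows "Bcol Iy B f = (\<lambda>z. B (cscale Iu z f))"
  using assms unfolding bounded_clin_def
  by (auto simp: Bcol_def cscale_def linear_add linear_scale bounded_linear.linear)

theorem proposition20:
  fixes Ix :: "'x::banach \<Rightarrow> 'x" and T :: "real \<Rightarrow> 'x \<Rightarrow> 'x"
    and \<beta> :: complex
    and Iy :: "'y::banach \<Rightarrow> 'y" and J :: "'x \<Rightarrow> 'y" and Tm1 :: "real \<Rightarrow> 'y \<Rightarrow> 'y"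
    and Iu :: "'u::banach \<Rightarrow> 'u" and B :: "'u \<Rightarrow> 'y"
    and Z :: Zspace
  assumes "cplx_struct Ix"
    and "C0_semigroup Ix T"
    and "in_resolvent_set Ix T \<beta>"
    and "extrapolation Ix T \<beta> Iy J Tm1"
    and "cplx_struct Iu"
    and "\<exists>S. finite S \<and> span S = (UNIV :: 'u set)"
    and "bounded_clin Iu Iy B"
    and "(\<exists>\<Phi>. Young \<Phi> \<and> Z = EPhi \<Phi>) \<or> Z = L1 \<or> Z = Linfty"
  shows "(Z_ISS Z Tm1 J B \<longleftrightarrow> (\<forall>f. Z_ISS Z Tm1 J (Bcol Iy B f)))
       \<and> (integral_ISS Tm1 J B \<longleftrightarrow> (\<forall>f. integral_ISS Tm1 J (Bcol Iy B f)))"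
proof -
  interpret extrapolated_semigroup Ix T \<beta> Iy J Tm1 using assms(1-4) by unfold_locales
  have Z: "admissible_Zspace Z" using assms(8) by (simp add: admissible_Zspace_def)
  obtain E and \<phi> :: "'u \<Rightarrow> 'u \<Rightarrow> real"
    where E: "finite E" "\<And>b. bounded_linear (\<phi> b)" "\<And>x. x = (\<Sum>b\<in>E. \<phi> b x *\<^sub>R b)"
    using assms(6) finite_span_bounded_coordinates by metis
  have "linear B" using assms(7) by (simp add: bounded_clin_def bounded_linear.linear)
  then have rep: "B x = (\<Sum>b\<in>E. \<phi> b x *\<^sub>R Bcol Iy B b 1)" for x
    using arg_cong[OF E(3)[of x], of B] by (simp add: linear_sum linear_scale Bcol_1)
  have Bcol_0: "Bcol Iy B 0 0 = 0" by (rule linear_0[OF linear_Bcol])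
  note col = Bcol_eq_compose[OF assms(7)]
  show ?thesis
  proof (intro conjI iffI allI)
    fix f assume "Z_ISS Z Tm1 J B"
    then show "Z_ISS Z Tm1 J (Bcol Iy B f)"
      unfolding col by (rule Z_ISS_compose[OF Z _ bounded_linear_cscale])
  next
    assume ISS: "\<forall>f. Z_ISS Z Tm1 J (Bcol Iy B f)"
    then obtain \<gamma> where "classKL \<gamma>" "\<And>t x. t \<ge> 0 \<Longrightarrow> norm (T t x) \<le> \<gamma> (norm x) t"
      using Z_ISS_imp_classKL_bound[OF Z spec[OF ISS, of 0] Bcol_0] by blast
    then show "Z_ISS Z Tm1 J B"
      using ISS by (intro Z_ISS_of_columns[OF Z E(1) _ _ _ E(2) linear_Bcol rep]) auto
  next
    fix f assume "integral_ISS Tm1 J B"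
    then show "integral_ISS Tm1 J (Bcol Iy B f)"
      unfolding col by (rule integral_ISS_compose[OF _ bounded_linear_cscale])
  next
    assume ISS: "\<forall>f. integral_ISS Tm1 J (Bcol Iy B f)"
    then obtain \<gamma> where "classKL \<gamma>" "\<And>t x. t \<ge> 0 \<Longrightarrow> norm (T t x) \<le> \<gamma> (norm x) t"
      using integral_ISS_imp_classKL_bound[OF spec[OF ISS, of 0] Bcol_0] by blast
    then show "integral_ISS Tm1 J B"
      using ISS by (intro integral_ISS_of_columns[OF E(1) _ _ _ E(2) linear_Bcol rep]) auto
  qed
qed

end
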